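(* Let $P$ be a rectangle with horizontal sides of length $w$ and vertical sides of length $1$ (aspect ratio $w$). Its two ping-pong cylinders are $\lambda$-stable. These are the only $\lambda$-stable periodic cylinders unless $$w=\frac{p}{q}\cot\left(\frac{\pi p}{2(p+q)}\right)$$ for some positive integers $p,q$. When $w$ satisfies this equation, there are, in addition to the ping-pong cylinders, at most two more $\lambda$-stable periodic cylinders, and their slopes are $\pm p/(qw)$.
   Context: For a polygon $P$, let $\Phi$ be its billiard map (collision to collision, specular reflection), in coordinates $(s,\theta)$ with $s$ arc length on $\partial P$ and $\theta\in(-\pi/2,\pi/2)$ the angle from the inward normal. For $\lambda>0$ let $R_\lambda(s,\theta)=(s,\lambda\theta)$ and $\Phi_\lambda:=R_\lambda\circ\Phi$. A periodic cylinder is a maximal one-parameter family of parallel periodic orbits of $\Phi$ with the same itinerary (sequence of sides hit). A ping-pong cylinder consists of orbits bouncing perpendicularly between two parallel sides. A periodic orbit $q$ of $\Phi$ is $\lambda^{+}$-stable (resp. $\lambda^-$-stable) if there exist a strictly decreasing (resp. strictly increasing) sequence $\lambda_n\to1$ and periodic orbits $q_n$ of $\Phi_{\lambda_n}$ with the same itinerary as $q$ such that $q_n\to q$. A periodic cylinder is $\lambda$-stable if it contains a $\lambda^+$-stable periodic orbit and a $\lambda^-$-stable periodic orbit. The slope of a cylinder is the slope of the (unfolded) straight lines of its trajectories. *)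

theory Defs
  imports Complex_Main
begin

text \<open>The boundary is parametrised by arc length
 s in [0, 2w+2), counterclockwise starting at the corner (0,0):
 side 0 = bottom (s in (0,w)), side 1 = right (s in (w,w+1)),
 side 2 = top (s in (w+1,2w+1)), side 3 = left (s in (2w+1,2w+2)).
 Corners (s in {0,w,w+1,2w+1}) are excluded from the phase space.\<close>

definition side_of :: "real \<Rightarrow> real \<Rightarrow> nat" where
  "side_of w s = (if s < w then 0 else if s < w + 1 then 1 else if s < 2*w + 1 then 2 else 3)"

definition bpt :: "real \<Rightarrow> real \<Rightarrow> real \<times> real" where
  "bpt w s = (if s \<le> w then (s, 0) else if s \<le> w + 1 then (w, s - w)
              else if s \<le> 2*w + 1 then (2*w + 1 - s, 1) else (0, 2*w + 2 - s))"

definition nrm :: "nat \<Rightarrow> real \<times> real" where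
  "nrm i = (if i = 0 then (0, 1) else if i = 1 then (-1, 0) else if i = 2 then (0, -1) else (1, 0))"

definition is_corner_s :: "real \<Rightarrow> real \<Rightarrow> bool" where
  "is_corner_s w s \<longleftrightarrow> s \<in> {0, w, w + 1, 2*w + 1}"

definition is_corner_pt :: "real \<Rightarrow> real \<times> real \<Rightarrow> bool" where
  "is_corner_pt w p \<longleftrightarrow> fst p \<in> {0, w} \<and> snd p \<in> {0, 1}"

definition arclen :: "real \<Rightarrow> real \<times> real \<Rightarrow> real" where
  "arclen w p = (let x = fst p; y = snd p in
     if y = 0 then x else if x = w then w + y else if y = 1 then 2*w + 1 - x else 2*w + 2 - y)"

definition rot :: "real \<Rightarrow> real \<times> real \<Rightarrow> real \<times> real" where
  "rot th v = (fst v * cos th - snd v * sin th, fst v * sin th + snd v * cos th)"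

definition exit_time :: "real \<Rightarrow> real \<times> real \<Rightarrow> real \<times> real \<Rightarrow> real" where
  "exit_time w p d =
    (let tx = (if fst d > 0 then (w - fst p) / fst d else - fst p / fst d);
         ty = (if snd d > 0 then (1 - snd p) / snd d else - snd p / snd d)
     in if fst d = 0 then ty else if snd d = 0 then tx else min tx ty)"

text \<open>Outgoing direction of the phase point (s, theta): theta is the angle from the inward normal.\<close>
definition dir :: "real \<Rightarrow> real \<times> real \<Rightarrow> real \<times> real" where
  "dir w x = rot (snd x) (nrm (side_of w (fst x)))"

definition hit_pt :: "real \<Rightarrow> real \<times> real \<Rightarrow> real \<times> real" where
  "hit_pt w x = (let p = bpt w (fst x); d = dir w x; t = exit_time w p d
                 in (fst p + t * fst d, snd p + t * snd d))"

definition billiard :: "real \<Rightarrow> real \<times> real \<Rightarrow> real \<times> real" where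
  "billiard w x = (let d = dir w x; q = hit_pt w x; s' = arclen w q; n' = nrm (side_of w s');
                       dn = fst d * fst n' + snd d * snd n';
                       d' = (fst d - 2 * dn * fst n', snd d - 2 * dn * snd n')
                   in (s', arcsin (fst n' * snd d' - snd n' * fst d')))"

definition R_lam :: "real \<Rightarrow> real \<times> real \<Rightarrow> real \<times> real" where
  "R_lam lam x = (fst x, lam * snd x)"

definition billiard_lam :: "real \<Rightarrow> real \<Rightarrow> real \<times> real \<Rightarrow> real \<times> real" where
  "billiard_lam w lam = R_lam lam \<circ> billiard w"

definition phase :: "real \<Rightarrow> (real \<times> real) set" where
  "phase w = {x. 0 \<le> fst x \<and> fst x < 2*w + 2 \<and> \<not> is_corner_s w (fst x) \<and> \<bar>snd x\<bar> < pi / 2}"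

definition regular :: "real \<Rightarrow> real \<times> real \<Rightarrow> bool" where
  "regular w x \<longleftrightarrow> x \<in> phase w \<and> \<not> is_corner_pt w (hit_pt w x)"

definition periodic_pt :: "real \<Rightarrow> (real \<times> real \<Rightarrow> real \<times> real) \<Rightarrow> real \<times> real \<Rightarrow> bool" where
  "periodic_pt w f x \<longleftrightarrow> (\<forall>n. regular w ((f ^^ n) x)) \<and> (\<exists>n>0. (f ^^ n) x = x)"

definition itin :: "real \<Rightarrow> (real \<times> real \<Rightarrow> real \<times> real) \<Rightarrow> real \<times> real \<Rightarrow> nat \<Rightarrow> nat" where
  "itin w f x = (\<lambda>n. side_of w (fst ((f ^^ n) x)))"

definition cyl :: "real \<Rightarrow> real \<times> real \<Rightarrow> (real \<times> real) set" where
  "cyl w q = {x. periodic_pt w (billiard w) x \<and>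
                 (\<exists>k. itin w (billiard w) x = itin w (billiard w) ((billiard w ^^ k) q))}"

definition is_cyl :: "real \<Rightarrow> (real \<times> real) set \<Rightarrow> bool" where
  "is_cyl w C \<longleftrightarrow> (\<exists>q. periodic_pt w (billiard w) q \<and> C = cyl w q)"

definition is_pingpong_cyl :: "real \<Rightarrow> (real \<times> real) set \<Rightarrow> bool" where
  "is_pingpong_cyl w C \<longleftrightarrow> (\<exists>q. periodic_pt w (billiard w) q \<and> snd q = 0 \<and> C = cyl w q)"

definition lam_plus_stable :: "real \<Rightarrow> real \<times> real \<Rightarrow> bool" where
  "lam_plus_stable w q \<longleftrightarrow> periodic_pt w (billiard w) q \<and>
     (\<exists>lam :: nat \<Rightarrow> real. \<exists>y :: nat \<Rightarrow> real \<times> real.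
        (\<forall>n. lam (Suc n) < lam n) \<and> lam \<longlonglongrightarrow> 1 \<and>
        (\<forall>n. periodic_pt w (billiard_lam w (lam n)) (y n) \<and>
             itin w (billiard_lam w (lam n)) (y n) = itin w (billiard w) q) \<and>
        y \<longlonglongrightarrow> q)"

definition lam_minus_stable :: "real \<Rightarrow> real \<times> real \<Rightarrow> bool" where
  "lam_minus_stable w q \<longleftrightarrow> periodic_pt w (billiard w) q \<and>
     (\<exists>lam :: nat \<Rightarrow> real. \<exists>y :: nat \<Rightarrow> real \<times> real.
        (\<forall>n. lam n < lam (Suc n)) \<and> lam \<longlonglongrightarrow> 1 \<and>
        (\<forall>n. lam n > 0) \<and>
        (\<forall>n. periodic_pt w (billiard_lam w (lam n)) (y n) \<and>
             itin w (billiard_lam w (lam n)) (y n) = itin w (billiard w) q) \<and>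
        y \<longlonglongrightarrow> q)"

definition lam_stable_cyl :: "real \<Rightarrow> (real \<times> real) set \<Rightarrow> bool" where
  "lam_stable_cyl w C \<longleftrightarrow> is_cyl w C \<and> (\<exists>q\<in>C. lam_plus_stable w q) \<and> (\<exists>q\<in>C. lam_minus_stable w q)"

definition slope :: "real \<Rightarrow> real \<times> real \<Rightarrow> real" where
  "slope w x = snd (dir w x) / fst (dir w x)"

end

theory Submission
  imports Defs
begin

text \<open>Away from the ping-pong orbits a trajectory in the rectangle keeps its direction up to
  sign changes, and the billiard map acts as a two-timer clock: the times to the next vertical
  and to the next horizontal wall run down together, and a timer is reset to its full length
  \<open>w / \<bar>dx\<bar>\<close>, resp. \<open>1 / \<bar>dy\<bar>\<close>, when its wall is hit. Over a period with \<open>V\<close> vertical and \<open>H\<close>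
  horizontal hits, \<open>V w / \<bar>dx\<bar> = H / \<bar>dy\<bar>\<close>.

  Let \<open>\<beta>\<close> be the angle of the direction with the vertical. \<open>\<Phi>\<close> preserves \<open>\<beta>\<close>, whereas \<open>\<Phi>\<^sub>\<lambda>\<close>
  maps it to \<open>\<lambda>\<beta>\<close> after a horizontal hit and to \<open>\<lambda>\<beta> + (1 - \<lambda>)\<pi>/2\<close> after a vertical one. A
  periodic orbit of \<open>\<Phi>\<^sub>\<lambda>\<close> therefore starts at the fixed point of an affine map of slope \<open>\<lambda>\<^sup>L\<close>, and
  letting \<open>\<lambda> \<rightarrow> 1\<close> forces \<open>\<beta> L = V \<pi>/2\<close>. With the clock relation this gives
  \<open>w = (H/V) cot (\<pi> H / (2(H+V)))\<close>; the right-hand side is strictly decreasing in \<open>V/(H+V)\<close>,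
  so \<open>w\<close> determines \<open>H/V\<close> and hence the slope.

  For the count, write the timer lengths as \<open>N u\<close> and \<open>M u\<close> with \<open>N, M\<close> coprime. Every orbit
  then passes through a normal point just after a vertical hit, and from a normal point the
  itinerary depends only on the signs of the direction. Going once around the clock multiplies
  the two components of the direction by \<open>(-1)\<^sup>M\<close> and \<open>(-1)\<^sup>N\<close>; as \<open>N\<close> and \<open>M\<close> are not both even,
  only two sign classes of cylinders remain.\<close>

lemma side_of_range: "side_of w s \<in> {0,1,2,3}"
  unfolding side_of_def by auto

lemma phase_cases:
  assumes "w > 0" "z \<in> phase w"
  shows "(side_of w (fst z) = 0 \<and> 0 < fst z \<and> fst z < w \<and> bpt w (fst z) = (fst z, 0))
       \<or> (side_of w (fst z) = 1 \<and> w < fst z \<and> fst z < w + 1 \<and> bpt w (fst z) = (w, fst z - w))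
       \<or> (side_of w (fst z) = 2 \<and> w + 1 < fst z \<and> fst z < 2*w+1 \<and> bpt w (fst z) = (2*w+1 - fst z, 1))
       \<or> (side_of w (fst z) = 3 \<and> 2*w+1 < fst z \<and> fst z < 2*w+2 \<and> bpt w (fst z) = (0, 2*w+2 - fst z))"
  using assms unfolding phase_def is_corner_s_def side_of_def bpt_def
  by (auto simp: not_less)

lemma dir_eq:
  "dir w z = (let t = snd z in
     if side_of w (fst z) = 0 then (- sin t, cos t)
     else if side_of w (fst z) = 1 then (- cos t, - sin t)
     else if side_of w (fst z) = 2 then (sin t, - cos t) else (cos t, sin t))"
  unfolding dir_def rot_def nrm_def using side_of_range[of w "fst z"] by (auto simp: Let_def)

lemma phase_cos_pos: "z \<in> phase w \<Longrightarrow> cos (snd z) > 0"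
  unfolding phase_def by (intro cos_gt_zero_pi) auto

lemma dir_norm_sq: "(fst (dir w z))\<^sup>2 + (snd (dir w z))\<^sup>2 = 1"
  unfolding dir_eq Let_def by (auto simp: power2_eq_square algebra_simps)

definition vert_wall_time :: "real \<Rightarrow> real \<times> real \<Rightarrow> real \<times> real \<Rightarrow> real" where
  "vert_wall_time w P d = (if fst d > 0 then (w - fst P) / fst d else - fst P / fst d)"

definition horiz_wall_time :: "real \<times> real \<Rightarrow> real \<times> real \<Rightarrow> real" where
  "horiz_wall_time P d = (if snd d > 0 then (1 - snd P) / snd d else - snd P / snd d)"

definition inward :: "real \<Rightarrow> real \<times> real \<Rightarrow> real \<times> real \<Rightarrow> bool" where
  "inward w P d \<longleftrightarrow> 0 \<le> fst P \<and> fst P \<le> w \<and> 0 \<le> snd P \<and> snd P \<le> 1 \<and>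
     (fst P = w \<longrightarrow> fst d < 0) \<and> (fst P = 0 \<longrightarrow> fst d > 0) \<and>
     (snd P = 1 \<longrightarrow> snd d < 0) \<and> (snd P = 0 \<longrightarrow> snd d > 0) \<and> fst d \<noteq> 0 \<and> snd d \<noteq> 0"

definition oblique :: "real \<Rightarrow> real \<times> real \<Rightarrow> bool" where
  "oblique w z \<longleftrightarrow> fst (dir w z) \<noteq> 0 \<and> snd (dir w z) \<noteq> 0"

lemma inward_bpt:
  assumes "w > 0" "z \<in> phase w" "oblique w z"
  shows "inward w (bpt w (fst z)) (dir w z)"
  using phase_cases[OF assms(1,2)] assms(1,3) phase_cos_pos[OF assms(2)]
  unfolding inward_def oblique_def dir_eq Let_def by (elim disjE) auto

lemma vert_wall_time_bounds:
  assumes "inward w P d" shows "0 < vert_wall_time w P d" "vert_wall_time w P d \<le> w / \<bar>fst d\<bar>"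
  using assms unfolding inward_def vert_wall_time_def
  by (auto simp: divide_simps split: if_splits)

lemma horiz_wall_time_bounds:
  assumes "inward w P d" shows "0 < horiz_wall_time P d" "horiz_wall_time P d \<le> 1 / \<bar>snd d\<bar>"
  using assms unfolding inward_def horiz_wall_time_def
  by (auto simp: divide_simps split: if_splits)

lemma exit_time_eq_min:
  assumes "fst d \<noteq> 0" "snd d \<noteq> 0"
  shows "exit_time w P d = min (vert_wall_time w P d) (horiz_wall_time P d)"
  using assms unfolding exit_time_def vert_wall_time_def horiz_wall_time_def Let_def by auto

definition vert_time :: "real \<Rightarrow> real \<times> real \<Rightarrow> real" where
  "vert_time w z = vert_wall_time w (bpt w (fst z)) (dir w z)"

definition horiz_time :: "real \<Rightarrow> real \<times> real \<Rightarrow> real" where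
  "horiz_time w z = horiz_wall_time (bpt w (fst z)) (dir w z)"

lemma wall_times_bounds:
  assumes "w > 0" "z \<in> phase w" "oblique w z"
  shows "0 < vert_time w z \<and> vert_time w z \<le> w / \<bar>fst (dir w z)\<bar>
    \<and> 0 < horiz_time w z \<and> horiz_time w z \<le> 1 / \<bar>snd (dir w z)\<bar>"
  using vert_wall_time_bounds[OF inward_bpt[OF assms]] horiz_wall_time_bounds[OF inward_bpt[OF assms]]
  unfolding vert_time_def horiz_time_def by blast

lemma billiard_oblique_eq:
  assumes "oblique w z"
  shows "billiard w z = (let d = dir w z; t = min (vert_time w z) (horiz_time w z);
            Q = (fst (bpt w (fst z)) + t * fst d, snd (bpt w (fst z)) + t * snd d);
            n' = nrm (side_of w (arclen w Q))
         in (arclen w Q, arcsin (fst n' * snd d - snd n' * fst d)))"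
  using assms unfolding billiard_def hit_pt_def Let_def vert_time_def horiz_time_def oblique_def
  by (simp add: exit_time_eq_min algebra_simps)

lemma regular_wall_times_neq:
  assumes "regular w z" "oblique w z"
  shows "vert_time w z \<noteq> horiz_time w z"
proof
  assume eq: "vert_time w z = horiz_time w z"
  define d where "d = dir w z"
  define P where "P = bpt w (fst z)"
  have dx: "fst d \<noteq> 0" and dy: "snd d \<noteq> 0" using assms(2) unfolding oblique_def d_def by auto
  have "hit_pt w z = (fst P + vert_wall_time w P d * fst d, snd P + horiz_wall_time P d * snd d)"
    using eq dx dy unfolding hit_pt_def Let_def vert_time_def horiz_time_def d_def P_def
    by (simp add: exit_time_eq_min)
  moreover have "fst P + vert_wall_time w P d * fst d \<in> {0, w}"
    using dx unfolding vert_wall_time_def by (auto simp: field_simps)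
  moreover have "snd P + horiz_wall_time P d * snd d \<in> {0, 1}"
    using dy unfolding horiz_wall_time_def by (auto simp: field_simps)
  ultimately have "is_corner_pt w (hit_pt w z)" unfolding is_corner_pt_def by simp
  then show False using assms(1) unfolding regular_def by simp
qed

lemma vertical_hit:
  assumes "inward w P d" "vert_wall_time w P d < horiz_wall_time P d"
  defines "t \<equiv> vert_wall_time w P d"
  shows "fst P + t * fst d = (if fst d > 0 then w else 0)"
    "0 < snd P + t * snd d" "snd P + t * snd d < 1"
    "horiz_wall_time (fst P + t * fst d, snd P + t * snd d) (- fst d, snd d) = horiz_wall_time P d - t"
proof -
  have t0: "t > 0" using vert_wall_time_bounds(1)[OF assms(1)] t_def by simp
  have lt: "t < horiz_wall_time P d" using assms(2) t_def by simp
  have I: "0 \<le> snd P" "snd P \<le> 1" "snd d \<noteq> 0" "fst d \<noteq> 0" using assms(1) unfolding inward_def by auto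
  show "fst P + t * fst d = (if fst d > 0 then w else 0)"
    using I(4) unfolding t_def vert_wall_time_def by (auto simp: field_simps)
  show "0 < snd P + t * snd d"
  proof (cases "snd d > 0")
    case True then show ?thesis using t0 I by (simp add: add_nonneg_pos)
  next
    case False
    then have "snd d < 0" using I by simp
    then show ?thesis using lt unfolding horiz_wall_time_def by (simp add: field_simps)
  qed
  show "snd P + t * snd d < 1"
  proof (cases "snd d > 0")
    case True
    then show ?thesis using lt unfolding horiz_wall_time_def by (simp add: field_simps)
  next
    case False
    then have "t * snd d < 0" using I t0 by (simp add: mult_pos_neg)
    then show ?thesis using I by simp
  qed
  show "horiz_wall_time (fst P + t * fst d, snd P + t * snd d) (- fst d, snd d) = horiz_wall_time P d - t"
    using I(3) unfolding horiz_wall_time_def by (auto simp: field_simps)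
qed

lemma horizontal_hit:
  assumes "inward w P d" "horiz_wall_time P d < vert_wall_time w P d"
  defines "t \<equiv> horiz_wall_time P d"
  shows "snd P + t * snd d = (if snd d > 0 then 1 else 0)"
    "0 < fst P + t * fst d" "fst P + t * fst d < w"
    "vert_wall_time w (fst P + t * fst d, snd P + t * snd d) (fst d, - snd d) = vert_wall_time w P d - t"
proof -
  have t0: "t > 0" using horiz_wall_time_bounds(1)[OF assms(1)] t_def by simp
  have lt: "t < vert_wall_time w P d" using assms(2) t_def by simp
  have I: "0 \<le> fst P" "fst P \<le> w" "snd d \<noteq> 0" "fst d \<noteq> 0" using assms(1) unfolding inward_def by auto
  show "snd P + t * snd d = (if snd d > 0 then 1 else 0)"
    using I(3) unfolding t_def horiz_wall_time_def by (auto simp: field_simps)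
  show "0 < fst P + t * fst d"
  proof (cases "fst d > 0")
    case True then show ?thesis using t0 I by (simp add: add_nonneg_pos)
  next
    case False
    then have "fst d < 0" using I by simp
    then show ?thesis using lt unfolding vert_wall_time_def by (simp add: field_simps)
  qed
  show "fst P + t * fst d < w"
  proof (cases "fst d > 0")
    case True
    then show ?thesis using lt unfolding vert_wall_time_def by (simp add: field_simps)
  next
    case False
    then have "t * fst d < 0" using I t0 by (simp add: mult_pos_neg)
    then show ?thesis using I by simp
  qed
  show "vert_wall_time w (fst P + t * fst d, snd P + t * snd d) (fst d, - snd d) = vert_wall_time w P d - t"
    using I(4) unfolding vert_wall_time_def by (auto simp: field_simps)
qed

lemma arcsin_props:
  assumes "\<bar>v\<bar> < 1"
  shows "sin (arcsin v) = v" "cos (arcsin v) = sqrt (1 - v\<^sup>2)" "\<bar>arcsin v\<bar> < pi/2"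
  using assms arcsin_lt_bounded[of v] by (auto simp: sin_arcsin cos_arcsin abs_less_iff)

lemma sqrt_one_minus_sq: "(a::real)\<^sup>2 + b\<^sup>2 = 1 \<Longrightarrow> sqrt (1 - b\<^sup>2) = \<bar>a\<bar>"
  by (metis add_diff_cancel_right' real_sqrt_abs)

lemma abs_lt_one_of_sq_sum: "(a::real)\<^sup>2 + b\<^sup>2 = 1 \<Longrightarrow> a \<noteq> 0 \<Longrightarrow> \<bar>b\<bar> < 1"
  by (metis abs_square_less_1 add_le_same_cancel2 not_le zero_less_power2)

lemma billiard_vertical_hit:
  assumes w: "w > 0" and z: "z \<in> phase w" and ob: "oblique w z"
    and lt: "vert_time w z < horiz_time w z"
  defines "d \<equiv> dir w z"
  obtains y where "0 < y" "y < 1"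
    "billiard w z = (if fst d > 0 then (w + y, arcsin (- snd d)) else (2*w + 2 - y, arcsin (snd d)))"
    "horiz_wall_time (if fst d > 0 then w else 0, y) (- fst d, snd d) = horiz_time w z - vert_time w z"
proof -
  define P where "P = bpt w (fst z)"
  define t where "t = vert_wall_time w P d"
  define y where "y = snd P + t * snd d"
  have I: "inward w P d" using inward_bpt[OF w z ob] d_def P_def by simp
  have lt': "vert_wall_time w P d < horiz_wall_time P d"
    using lt unfolding vert_time_def horiz_time_def d_def P_def .
  note H = vertical_hit[OF I lt', folded t_def, folded y_def]
  have B: "billiard w z = (arclen w (fst P + t * fst d, y),
     arcsin (fst (nrm (side_of w (arclen w (fst P + t * fst d, y)))) * snd d
       - snd (nrm (side_of w (arclen w (fst P + t * fst d, y)))) * fst d))"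
    using billiard_oblique_eq[OF ob] lt unfolding Let_def d_def P_def y_def t_def vert_time_def horiz_time_def
    by simp
  have "billiard w z = (if fst d > 0 then (w + y, arcsin (- snd d)) else (2*w + 2 - y, arcsin (snd d)))"
  proof (cases "fst d > 0")
    case True
    have "arclen w (w, y) = w + y" "side_of w (w + y) = 1"
      using H(2,3) w unfolding arclen_def side_of_def by simp_all
    then show ?thesis using B H(1) True by (simp add: nrm_def)
  next
    case False
    have "arclen w (0, y) = 2*w + 2 - y" "side_of w (2*w + 2 - y) = 3"
      using H(2,3) w unfolding arclen_def side_of_def by simp_all
    then show ?thesis using B H(1) False by (simp add: nrm_def)
  qed
  moreover have "horiz_wall_time (if fst d > 0 then w else 0, y) (- fst d, snd d) = horiz_time w z - vert_time w z"
    using H(1,4) unfolding t_def vert_time_def horiz_time_def d_def P_def by simp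
  ultimately show ?thesis using that H(2,3) by blast
qed

lemma billiard_vertical_bounce:
  assumes w: "w > 0" and z: "z \<in> phase w" and ob: "oblique w z"
    and lt: "vert_time w z < horiz_time w z"
  shows "billiard w z \<in> phase w \<and> dir w (billiard w z) = (- fst (dir w z), snd (dir w z))
     \<and> vert_time w (billiard w z) = w / \<bar>fst (dir w z)\<bar>
     \<and> horiz_time w (billiard w z) = horiz_time w z - vert_time w z
     \<and> side_of w (fst (billiard w z)) = (if fst (dir w z) > 0 then 1 else 3)"
proof -
  define d where "d = dir w z"
  obtain y where y01: "0 < y" "y < 1"
    and bz: "billiard w z = (if fst d > 0 then (w + y, arcsin (- snd d)) else (2*w + 2 - y, arcsin (snd d)))"
    and ht: "horiz_wall_time (if fst d > 0 then w else 0, y) (- fst d, snd d) = horiz_time w z - vert_time w z"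
    using billiard_vertical_hit[OF w z ob lt] unfolding d_def by blast
  have dx: "fst d \<noteq> 0" using ob unfolding oblique_def d_def by simp
  have u: "(fst d)\<^sup>2 + (snd d)\<^sup>2 = 1" using dir_norm_sq d_def by simp
  have dy1: "\<bar>snd d\<bar> < 1" using abs_lt_one_of_sq_sum[OF u dx] .
  have sd: "side_of w (fst (billiard w z)) = (if fst d > 0 then 1 else 3)"
    using bz y01 w unfolding side_of_def by auto
  have bp: "bpt w (fst (billiard w z)) = (if fst d > 0 then w else 0, y)"
    using bz y01 w unfolding bpt_def by auto
  have dr: "dir w (billiard w z) = (- fst d, snd d)"
    using bz sd arcsin_props[of "- snd d"] arcsin_props[of "snd d"] dy1 sqrt_one_minus_sq[OF u] dx
    unfolding dir_eq Let_def by (auto split: if_splits)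
  have "billiard w z \<in> phase w"
    using bz y01 w arcsin_props(3)[of "- snd d"] arcsin_props(3)[of "snd d"] dy1
    unfolding phase_def is_corner_s_def by auto
  moreover have "vert_time w (billiard w z) = w / \<bar>fst d\<bar>"
    using dx unfolding vert_time_def bp dr vert_wall_time_def by auto
  moreover have "horiz_time w (billiard w z) = horiz_time w z - vert_time w z"
    using ht by (simp add: horiz_time_def[of w "billiard w z"] bp dr)
  ultimately show ?thesis using dr sd d_def by simp
qed

lemma billiard_horizontal_hit:
  assumes w: "w > 0" and z: "z \<in> phase w" and ob: "oblique w z"
    and lt: "horiz_time w z < vert_time w z"
  defines "d \<equiv> dir w z"
  obtains x where "0 < x" "x < w"
    "billiard w z = (if snd d > 0 then (2*w + 1 - x, arcsin (fst d)) else (x, arcsin (- fst d)))"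
    "vert_wall_time w (x, if snd d > 0 then 1 else 0) (fst d, - snd d) = vert_time w z - horiz_time w z"
proof -
  define P where "P = bpt w (fst z)"
  define t where "t = horiz_wall_time P d"
  define x where "x = fst P + t * fst d"
  have I: "inward w P d" using inward_bpt[OF w z ob] d_def P_def by simp
  have lt': "horiz_wall_time P d < vert_wall_time w P d"
    using lt unfolding vert_time_def horiz_time_def d_def P_def .
  note H = horizontal_hit[OF I lt', folded t_def, folded x_def]
  have mn: "min (vert_time w z) (horiz_time w z) = t"
    using lt unfolding horiz_time_def P_def d_def t_def by simp
  have B: "billiard w z = (arclen w (x, snd P + t * snd d),
     arcsin (fst (nrm (side_of w (arclen w (x, snd P + t * snd d)))) * snd d
       - snd (nrm (side_of w (arclen w (x, snd P + t * snd d)))) * fst d))"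
    using billiard_oblique_eq[OF ob] unfolding Let_def mn unfolding d_def P_def x_def by simp
  have "billiard w z = (if snd d > 0 then (2*w + 1 - x, arcsin (fst d)) else (x, arcsin (- fst d)))"
  proof (cases "snd d > 0")
    case True
    have "arclen w (x, 1) = 2*w + 1 - x" "side_of w (2*w + 1 - x) = 2"
      using H(2,3) w unfolding arclen_def side_of_def by simp_all
    then show ?thesis using B H(1) True by (simp add: nrm_def)
  next
    case False
    have "arclen w (x, 0) = x" "side_of w x = 0"
      using H(2,3) w unfolding arclen_def side_of_def by simp_all
    then show ?thesis using B H(1) False by (simp add: nrm_def)
  qed
  moreover have "vert_wall_time w (x, if snd d > 0 then 1 else 0) (fst d, - snd d) = vert_time w z - horiz_time w z"
    using H(1,4) unfolding t_def vert_time_def horiz_time_def d_def P_def by simp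
  ultimately show ?thesis using that H(2,3) by blast
qed

lemma billiard_horizontal_bounce:
  assumes w: "w > 0" and z: "z \<in> phase w" and ob: "oblique w z"
    and lt: "horiz_time w z < vert_time w z"
  shows "billiard w z \<in> phase w \<and> dir w (billiard w z) = (fst (dir w z), - snd (dir w z))
     \<and> horiz_time w (billiard w z) = 1 / \<bar>snd (dir w z)\<bar>
     \<and> vert_time w (billiard w z) = vert_time w z - horiz_time w z
     \<and> side_of w (fst (billiard w z)) = (if snd (dir w z) > 0 then 2 else 0)"
proof -
  define d where "d = dir w z"
  obtain x where x01: "0 < x" "x < w"
    and bz: "billiard w z = (if snd d > 0 then (2*w + 1 - x, arcsin (fst d)) else (x, arcsin (- fst d)))"
    and vt: "vert_wall_time w (x, if snd d > 0 then 1 else 0) (fst d, - snd d) = vert_time w z - horiz_time w z"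
    using billiard_horizontal_hit[OF w z ob lt] unfolding d_def by blast
  have dy: "snd d \<noteq> 0" using ob unfolding oblique_def d_def by simp
  have u: "(snd d)\<^sup>2 + (fst d)\<^sup>2 = 1" using dir_norm_sq d_def by (simp add: add.commute)
  have dx1: "\<bar>fst d\<bar> < 1" using abs_lt_one_of_sq_sum[OF u dy] .
  have sd: "side_of w (fst (billiard w z)) = (if snd d > 0 then 2 else 0)"
    using bz x01 w unfolding side_of_def by auto
  have bp: "bpt w (fst (billiard w z)) = (x, if snd d > 0 then 1 else 0)"
    using bz x01 w unfolding bpt_def by auto
  have dr: "dir w (billiard w z) = (fst d, - snd d)"
    using bz sd arcsin_props[of "- fst d"] arcsin_props[of "fst d"] dx1 sqrt_one_minus_sq[OF u] dy
    unfolding dir_eq Let_def by (auto split: if_splits)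
  have "billiard w z \<in> phase w"
    using bz x01 w arcsin_props(3)[of "- fst d"] arcsin_props(3)[of "fst d"] dx1
    unfolding phase_def is_corner_s_def by auto
  moreover have "horiz_time w (billiard w z) = 1 / \<bar>snd d\<bar>"
    using dy unfolding horiz_time_def bp dr horiz_wall_time_def by auto
  moreover have "vert_time w (billiard w z) = vert_time w z - horiz_time w z"
    using vt by (simp add: vert_time_def[of w "billiard w z"] bp dr)
  ultimately show ?thesis using dr sd d_def by simp
qed

section \<open>Two-timer clocks\<close>

text \<open>\<open>X\<close> and \<open>Y\<close> run down at unit speed; whichever expires first is reset to its full
  length \<open>A\<close>, resp. \<open>B\<close>, and the other keeps running.\<close>

definition wall_clock :: "real \<Rightarrow> real \<Rightarrow> (nat \<Rightarrow> real) \<Rightarrow> (nat \<Rightarrow> real) \<Rightarrow> bool" where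
  "wall_clock A B X Y \<longleftrightarrow> (\<forall>k. 0 < X k \<and> X k \<le> A \<and> 0 < Y k \<and> Y k \<le> B \<and> X k \<noteq> Y k \<and>
     X (Suc k) = (if X k < Y k then A else X k - Y k) \<and> Y (Suc k) = (if X k < Y k then Y k - X k else B))"

definition x_resets :: "(nat \<Rightarrow> real) \<Rightarrow> (nat \<Rightarrow> real) \<Rightarrow> nat \<Rightarrow> nat" where
  "x_resets X Y n = (\<Sum>k<n. if X k < Y k then 1 else 0)"

definition clock_time :: "(nat \<Rightarrow> real) \<Rightarrow> (nat \<Rightarrow> real) \<Rightarrow> nat \<Rightarrow> real" where
  "clock_time X Y n = (\<Sum>k<n. min (X k) (Y k))"

lemma x_resets_0 [simp]: "x_resets X Y 0 = 0"
  unfolding x_resets_def by simp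

lemma x_resets_Suc: "x_resets X Y (Suc n) = x_resets X Y n + (if X n < Y n then 1 else 0)"
  unfolding x_resets_def by simp

lemma x_resets_le: "x_resets X Y n \<le> n"
  by (induction n) (auto simp: x_resets_Suc)

lemma x_resets_mono: "m \<le> n \<Longrightarrow> x_resets X Y m \<le> x_resets X Y n"
  by (induction n) (auto simp: x_resets_Suc le_Suc_eq)

lemma wall_clock_elapsed:
  assumes "wall_clock A B X Y"
  shows "X n + clock_time X Y n = X 0 + A * real (x_resets X Y n)
    \<and> Y n + clock_time X Y n = Y 0 + B * real (n - x_resets X Y n)"
proof (induction n)
  case 0 then show ?case by (simp add: clock_time_def)
next
  case (Suc n)
  have c: "x_resets X Y n \<le> n" by (rule x_resets_le)
  have s: "X (Suc n) = (if X n < Y n then A else X n - Y n)" "Y (Suc n) = (if X n < Y n then Y n - X n else B)"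
    using assms unfolding wall_clock_def by auto
  have t: "clock_time X Y (Suc n) = clock_time X Y n + min (X n) (Y n)" unfolding clock_time_def by simp
  show ?case
  proof (cases "X n < Y n")
    case True
    then show ?thesis using Suc s t c by (simp add: x_resets_Suc algebra_simps Suc_diff_le)
  next
    case False
    have "Suc n - x_resets X Y n = Suc (n - x_resets X Y n)" using c by simp
    then show ?thesis using False Suc s t c by (simp add: x_resets_Suc algebra_simps)
  qed
qed

lemma clock_time_pos: "wall_clock A B X Y \<Longrightarrow> n > 0 \<Longrightarrow> clock_time X Y n > 0"
  unfolding clock_time_def wall_clock_def by (intro sum_pos) (auto simp: min_def)

lemma wall_clock_period_balance:
  assumes c: "wall_clock A B X Y" and p: "X L = X 0" "Y L = Y 0" "L > 0"
  shows "A * real (x_resets X Y L) = B * real (L - x_resets X Y L)" "A * real (x_resets X Y L) > 0"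
  using wall_clock_elapsed[OF c, of L] clock_time_pos[OF c p(3)] p by auto

lemma wall_clock_x_reset_after:
  assumes c: "wall_clock A B X Y" and B: "B > 0"
  shows "\<exists>n\<ge>m. X n < Y n"
proof (rule ccontr)
  assume "\<not> ?thesis"
  then have h: "\<And>n. n \<ge> m \<Longrightarrow> X n > Y n"
    using c unfolding wall_clock_def by (meson linorder_neqE_linordered_idom)
  have Y1: "Y (Suc n) = B" and X1: "X (Suc n) = X n - Y n" if "n \<ge> m" for n
    using h[OF that] c unfolding wall_clock_def by auto
  have dec: "X (Suc m + Suc t) = X (Suc m) - real (Suc t) * B" for t
  proof (induction t)
    case 0 then show ?case using X1[of "Suc m"] Y1[of m] by simp
  next
    case (Suc t)
    have "X (Suc m + Suc (Suc t)) = X (Suc m + Suc t) - Y (Suc m + Suc t)"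
      using X1[of "Suc m + Suc t"] by simp
    also have "Y (Suc m + Suc t) = B" using Y1[of "m + Suc t"] by simp
    finally show ?case using Suc by (simp add: algebra_simps)
  qed
  obtain t where t: "real t * B > X (Suc m)" using reals_Archimedean3[OF B] by blast
  have "X (Suc m + Suc t) < 0" using dec[of t] t B by (simp add: algebra_simps)
  then show False using c unfolding wall_clock_def by (meson less_asym)
qed

lemma x_resets_unbounded:
  assumes c: "wall_clock A B X Y" and B: "B > 0"
  shows "\<exists>n. x_resets X Y n \<ge> K"
proof (induction K)
  case (Suc K)
  then obtain n where n: "x_resets X Y n \<ge> K" by blast
  obtain n' where n': "n' \<ge> n" "X n' < Y n'" using wall_clock_x_reset_after[OF c B, of n] by blast
  have "x_resets X Y (Suc n') = x_resets X Y n' + 1" using n' by (simp add: x_resets_Suc)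
  moreover have "x_resets X Y n' \<ge> x_resets X Y n" using x_resets_mono n' by blast
  ultimately show ?case using n by (intro exI[of _ "Suc n'"]) simp
qed simp

lemma wall_clock_x_reset_number:
  assumes c: "wall_clock A B X Y" and B: "B > 0"
  shows "\<exists>j. X j < Y j \<and> x_resets X Y (Suc j) = Suc K"
proof -
  define n where "n = (LEAST n. x_resets X Y n \<ge> Suc K)"
  have n1: "x_resets X Y n \<ge> Suc K"
    unfolding n_def by (rule LeastI_ex[OF x_resets_unbounded[OF c B]])
  then obtain j where j: "n = Suc j" by (cases n) auto
  have "\<not> x_resets X Y j \<ge> Suc K"
    using not_less_Least[of j "\<lambda>n. x_resets X Y n \<ge> Suc K"] j unfolding n_def by simp
  then show ?thesis using n1 j by (intro exI[of _ j]) (auto simp: x_resets_Suc split: if_splits)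
qed

lemma wall_clock_after_x_reset:
  assumes c: "wall_clock A B X Y" and lt: "X j < Y j"
  shows "X (Suc j) = A" "Y (Suc j) < B"
  using c lt unfolding wall_clock_def by (smt (verit))+

lemma int_mult_in_window_eq_0:
  fixes d :: real and c M :: int
  assumes "0 \<le> d" "d < 1" "M \<ge> 1" "0 < d + of_int c * of_int M" "d + of_int c * of_int M < of_int M"
  shows "c = 0"
proof (rule ccontr)
  assume "c \<noteq> 0"
  then consider "c \<ge> 1" | "c \<le> -1" by linarith
  then show False
  proof cases
    case 1
    then have "of_int M \<le> (of_int c * of_int M :: real)" using assms(3) by simp
    then show False using assms(1,5) by linarith
  next
    case 2
    then have "of_int c * of_int M \<le> ((-1) * of_int M :: real)" using assms(3) by (intro mult_right_mono) auto
    then show False using assms(2,3,4) by linarith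
  qed
qed

lemma exists_nat_mult_cong:
  fixes N M :: nat and i :: int
  assumes "coprime N M" "M > 0"
  shows "\<exists>k::nat. \<exists>c::int. int k * int N = i + c * int M"
proof -
  have "gcd (int N) (int M) = 1" using assms(1) by (simp add: coprime_iff_gcd_eq_1 gcd_int_def)
  then obtain u v where uv: "u * int N + v * int M = 1" using bezout_int[of "int N" "int M"] by auto
  define k where "k = (u * i) mod int M"
  define s where "s = (u * i) div int M"
  have k0: "k \<ge> 0" unfolding k_def using assms(2) by simp
  have k: "k = u * i - s * int M" unfolding k_def s_def by (simp add: minus_div_mult_eq_mod [symmetric] mult.commute)
  have "k * int N = i * (u * int N) - s * int M * int N" unfolding k by (simp add: algebra_simps)
  also have "u * int N = 1 - v * int M" using uv by linarith
  finally have "k * int N = i + (- i * v - s * int N) * int M" by (simp add: algebra_simps)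
  then show ?thesis using k0 by (intro exI[of _ "nat k"] exI[of _ "- i * v - s * int N"]) simp
qed

text \<open>With commensurable lengths \<open>A = N u\<close>, \<open>B = M u\<close>, the quantity \<open>Y - X\<close> is constant modulo \<open>u\<close> at
  the reset times of \<open>X\<close>, which pins down \<open>Y\<close> just after a suitable reset.\<close>

lemma wall_clock_normal_time:
  assumes c: "wall_clock A B X Y" and A: "A = real N * u" and B: "B = real M * u" and u: "u > 0"
    and NM: "N > 0" "M > 0" "coprime N M"
  shows "\<exists>j. X j < Y j \<and> 0 < Y (Suc j) \<and> Y (Suc j) < u"
proof -
  have B0: "B > 0" using B u NM by simp
  define r where "r = (Y 0 - X 0) / u"
  define i where "i = floor r"
  define \<delta> where "\<delta> = r - of_int i"
  have \<delta>: "0 \<le> \<delta>" "\<delta> < 1" unfolding \<delta>_def i_def by linarith+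
  obtain k :: nat and c0 :: int where kc: "int k * int N = i + c0 * int M"
    using exists_nat_mult_cong[OF NM(3) NM(2)] by blast
  obtain j where j: "X j < Y j" "x_resets X Y (Suc j) = Suc k"
    using wall_clock_x_reset_number[OF c B0] by blast
  define h where "h = Suc j - Suc k"
  note el = wall_clock_elapsed[OF c, of "Suc j"]
  have XA: "X (Suc j) = A" and YB: "Y (Suc j) < B" using wall_clock_after_x_reset[OF c j(1)] by auto
  have Ypos: "Y (Suc j) > 0" using c unfolding wall_clock_def by auto
  have "clock_time X Y (Suc j) = X 0 + A * real k" using el XA j(2) by (simp add: algebra_simps)
  then have "Y (Suc j) = Y 0 - X 0 - A * real k + B * real h" using el j(2) unfolding h_def by simp
  then have "Y (Suc j) / u = r - real k * real N + real h * real M"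
    unfolding A B r_def using u by (simp add: field_simps)
  also have "real k * real N = of_int i + of_int c0 * real M"
    using arg_cong[OF kc, of real_of_int] by simp
  finally have Yu: "Y (Suc j) / u = \<delta> + of_int (int h - c0) * of_int (int M)"
    unfolding \<delta>_def by (simp add: algebra_simps)
  have "0 < Y (Suc j) / u" using Ypos u by simp
  moreover have "Y (Suc j) / u < real M" using YB B u by (simp add: divide_less_eq mult.commute)
  ultimately have "int h - c0 = 0" using int_mult_in_window_eq_0[OF \<delta>, of "int M" "int h - c0"] NM Yu by simp
  then have "Y (Suc j) = \<delta> * u" using Yu u by (simp add: divide_eq_eq)
  then show ?thesis using j(1) Ypos \<delta> u by (intro exI[of _ j]) (simp add: mult_less_cancel_right1)
qed

lemma wall_clock_return:
  assumes c: "wall_clock A B X Y" and A: "A = real N * u" and B: "B = real M * u" and u: "u > 0"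
    and NM: "N > 0" "M > 0" and X0: "X 0 = A" and Y0: "0 < Y 0" "Y 0 < u"
  shows "\<exists>j. X j < Y j \<and> x_resets X Y (Suc j) = M \<and> Suc j - x_resets X Y (Suc j) = N \<and> Y (Suc j) = Y 0"
proof -
  have B0: "B > 0" using B u NM by simp
  obtain j where j: "X j < Y j" "x_resets X Y (Suc j) = Suc (M - 1)"
    using wall_clock_x_reset_number[OF c B0] by blast
  have jM: "x_resets X Y (Suc j) = M" using j NM by simp
  define h where "h = Suc j - M"
  note el = wall_clock_elapsed[OF c, of "Suc j"]
  have XA: "X (Suc j) = A" and YB: "Y (Suc j) < B" using wall_clock_after_x_reset[OF c j(1)] by auto
  have Ypos: "Y (Suc j) > 0" using c unfolding wall_clock_def by auto
  have "clock_time X Y (Suc j) = A * real M" using el XA jM X0 by (simp add: algebra_simps)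
  then have "Y (Suc j) = Y 0 - A * real M + B * real h" using el jM unfolding h_def by simp
  then have Yu: "Y (Suc j) / u = Y 0 / u + of_int (int h - int N) * of_int (int M)"
    unfolding A B using u by (simp add: field_simps)
  moreover have "0 \<le> Y 0 / u" "Y 0 / u < 1" using Y0 u by (auto simp: divide_less_eq)
  moreover have "0 < Y (Suc j) / u" using Ypos u by simp
  moreover have "Y (Suc j) / u < real M" using YB B u by (simp add: divide_less_eq mult.commute)
  ultimately have hN: "int h - int N = 0"
    using int_mult_in_window_eq_0[of "Y 0 / u" "int M" "int h - int N"] NM by simp
  then have "Y (Suc j) = Y 0" using Yu u by simp
  then show ?thesis using j(1) jM hN unfolding h_def by (intro exI[of _ j]) simp
qed

text \<open>The sequence of resets is determined by the relative order of the two arithmetic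
  progressions of expiry times \<open>X 0 + k A\<close> and \<open>Y 0 + l B\<close>.\<close>

lemma wall_clock_same_order:
  assumes c1: "wall_clock A B X1 Y1" and c2: "wall_clock A B X2 Y2"
    and o: "\<forall>k l::nat. X1 0 + real k * A < Y1 0 + real l * B \<longleftrightarrow> X2 0 + real k * A < Y2 0 + real l * B"
  shows "X1 n < Y1 n \<longleftrightarrow> X2 n < Y2 n"
proof -
  have "\<forall>k l::nat. X1 n + real k * A < Y1 n + real l * B \<longleftrightarrow> X2 n + real k * A < Y2 n + real l * B"
  proof (induction n)
    case 0 then show ?case using o by simp
  next
    case (Suc n)
    have e1: "X1 n < Y1 n \<longleftrightarrow> X2 n < Y2 n" using Suc.IH[rule_format, of 0 0] by simp
    show ?case
    proof (cases "X1 n < Y1 n")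
      case True
      then have s: "X1 (Suc n) = A" "Y1 (Suc n) = Y1 n - X1 n" "X2 (Suc n) = A" "Y2 (Suc n) = Y2 n - X2 n"
        using c1 c2 e1 unfolding wall_clock_def by auto
      show ?thesis
        unfolding s using Suc.IH[rule_format, of "Suc k" l for k l] by (simp add: algebra_simps)
    next
      case False
      then have s: "X1 (Suc n) = X1 n - Y1 n" "Y1 (Suc n) = B" "X2 (Suc n) = X2 n - Y2 n" "Y2 (Suc n) = B"
        using c1 c2 e1 unfolding wall_clock_def by auto
      show ?thesis
        unfolding s using Suc.IH[rule_format, of k "Suc l" for k l] by (simp add: algebra_simps)
    qed
  qed
  then show ?thesis by (metis add.right_neutral mult_zero_left of_nat_0)
qed

lemma normal_start_order:
  assumes A: "A = real N * u" and B: "B = real M * u" and u: "u > 0" and X0: "X0 = A" and Y0: "0 < Y0" "Y0 < u"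
  shows "X0 + real k * A < Y0 + real l * B \<longleftrightarrow> N * Suc k \<le> l * M"
proof
  assume h: "X0 + real k * A < Y0 + real l * B"
  show "N * Suc k \<le> l * M"
  proof (rule ccontr)
    assume "\<not> ?thesis"
    then have "real (l * M + 1) \<le> real (N * Suc k)" by (simp only: of_nat_le_iff)
    then have "(real l * real M + 1) * u \<le> real N * (real k + 1) * u"
      using u by (intro mult_right_mono) (auto simp: algebra_simps)
    then show False using h u Y0 unfolding X0 A B by (simp add: algebra_simps)
  qed
next
  assume "N * Suc k \<le> l * M"
  then have "real (N * Suc k) \<le> real (l * M)" by (simp only: of_nat_le_iff)
  then have "real N * (real k + 1) * u \<le> real l * real M * u" using u by (intro mult_right_mono) (auto simp: algebra_simps)
  then show "X0 + real k * A < Y0 + real l * B" using u Y0 unfolding X0 A B by (simp add: algebra_simps)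
qed

section \<open>The resonance condition\<close>

lemma less_tan:
  assumes "0 < x" "x < pi/2"
  shows "x < tan x"
proof -
  have "\<exists>z. 0 < z \<and> z < x \<and> (tan x - x) - (tan 0 - 0) = (x - 0) * (inverse ((cos z)\<^sup>2) - 1)"
  proof (rule MVT2)
    fix y assume "0 \<le> y" "y \<le> x"
    then have "cos y \<noteq> 0" using assms by (intro cos_gt_zero_pi[THEN less_imp_neq, symmetric]) auto
    then show "DERIV (\<lambda>x. tan x - x) y :> inverse ((cos y)\<^sup>2) - 1"
      by (auto intro!: derivative_eq_intros)
  qed (use assms in simp)
  then obtain z where z: "0 < z" "z < x" "tan x - x = x * (inverse ((cos z)\<^sup>2) - 1)" by auto
  have "0 < cos z" "cos z < 1" using z assms cos_monotone_0_pi[of 0 z] by (auto intro: cos_gt_zero_pi)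
  then have "inverse ((cos z)\<^sup>2) > 1" by (simp add: one_less_inverse power_less_one_iff)
  then show ?thesis using z by (smt (verit) mult_pos_pos)
qed

definition sinc :: "real \<Rightarrow> real" where
  "sinc t = sin t / t"

lemma sinc_pos: "0 < t \<Longrightarrow> t < pi/2 \<Longrightarrow> sinc t > 0"
  unfolding sinc_def by (simp add: sin_gt_zero)

lemma sinc_strict_antimono:
  assumes "0 < s" "s < t" "t < pi/2"
  shows "sinc t < sinc s"
proof -
  have "\<exists>z. s < z \<and> z < t \<and> sinc t - sinc s = (t - s) * ((cos z * z - sin z) / z\<^sup>2)"
  proof (rule MVT2)
    fix y assume "s \<le> y" "y \<le> t"
    then have "y \<noteq> 0" using assms by auto
    then show "DERIV sinc y :> (cos y * y - sin y) / y\<^sup>2"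
      unfolding sinc_def by (auto intro!: derivative_eq_intros simp: power2_eq_square)
  qed (use assms in simp)
  then obtain z where z: "s < z" "z < t" "sinc t - sinc s = (t - s) * ((cos z * z - sin z) / z\<^sup>2)"
    by auto
  have z0: "0 < z" "z < pi/2" using z assms by auto
  have c0: "0 < cos z" using z0 by (intro cos_gt_zero_pi) auto
  have "z < sin z / cos z" using less_tan[OF z0] by (simp add: tan_def)
  then have "cos z * z - sin z < 0" using c0 by (simp add: pos_less_divide_eq mult.commute)
  then have "(cos z * z - sin z) / z\<^sup>2 < 0" using z0 by (simp add: divide_neg_pos)
  then show ?thesis using z assms by (smt (verit) mult_pos_neg)
qed

text \<open>The aspect ratio \<open>w\<close> of a rectangle carrying a stable non-ping-pong cylinder whose trajectories
  make the angle \<open>t\<close> with the vertical.\<close>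

definition resonant_aspect :: "real \<Rightarrow> real" where
  "resonant_aspect t = sinc t / sinc (pi/2 - t)"

lemma resonant_aspect_strict_antimono:
  assumes "0 < s" "s < t" "t < pi/2"
  shows "resonant_aspect t < resonant_aspect s"
proof -
  have a: "sinc t < sinc s" "sinc (pi/2 - s) < sinc (pi/2 - t)"
    using assms by (auto intro!: sinc_strict_antimono)
  have p: "sinc t > 0" "sinc (pi/2 - t) > 0" "sinc (pi/2 - s) > 0"
    using assms by (auto intro!: sinc_pos)
  have "sinc t / sinc (pi/2 - t) < sinc s / sinc (pi/2 - t)" using a p by (simp add: divide_strict_right_mono)
  also have "\<dots> < sinc s / sinc (pi/2 - s)" using a p assms by (simp add: divide_strict_left_mono sinc_pos)
  finally show ?thesis unfolding resonant_aspect_def .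
qed

lemma resonant_aspect_inj:
  "0 < s \<Longrightarrow> s < pi/2 \<Longrightarrow> 0 < t \<Longrightarrow> t < pi/2 \<Longrightarrow> resonant_aspect s = resonant_aspect t \<Longrightarrow> s = t"
  using resonant_aspect_strict_antimono[of s t] resonant_aspect_strict_antimono[of t s]
  by (cases "s < t"; cases "t < s") auto

lemma resonant_aspect_eq_cot:
  assumes "0 < t" "t < pi/2"
  shows "resonant_aspect t = (pi/2 - t) / t * cot (pi/2 - t)"
proof -
  have "cos (pi/2 - t) = sin t" "sin (pi/2 - t) = cos t" using sin_cos_eq[of t] cos_sin_eq[of t] by simp_all
  moreover have "cos t > 0" "pi/2 - t > 0" using assms by (auto intro: cos_gt_zero_pi)
  ultimately show ?thesis using assms unfolding resonant_aspect_def sinc_def cot_def by (simp add: divide_simps)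
qed

lemma resonant_aspect_rational:
  fixes p q :: nat
  assumes "p > 0" "q > 0"
  defines "t \<equiv> pi * real q / (2 * real (p + q))"
  shows "real p / real q * cot (pi * real p / (2 * real (p + q))) = resonant_aspect t" "0 < t" "t < pi/2"
proof -
  have pq: "real (p + q) > 0" using assms by simp
  show t0: "0 < t" using assms unfolding t_def by simp
  have "real q / real (p + q) < 1" using assms pq by (simp add: divide_less_eq)
  then have "(pi/2) * (real q / real (p + q)) < (pi/2) * 1" by (intro mult_strict_left_mono) auto
  then show tl: "t < pi/2" unfolding t_def by simp
  have e: "pi * real p / (2 * real (p + q)) = pi/2 - t"
    unfolding t_def using pq by (simp add: field_simps)
  have "(pi/2 - t) / t = (pi * real p / (2 * real (p + q))) / (pi * real q / (2 * real (p + q)))"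
    by (simp only: e t_def)
  also have "\<dots> = ((pi / (2 * real (p + q))) * real p) / ((pi / (2 * real (p + q))) * real q)"
    by simp
  finally have "real p / real q = (pi/2 - t) / t"
    using assms by (subst (asm) mult_divide_mult_cancel_left) auto
  then show "real p / real q * cot (pi * real p / (2 * real (p + q))) = resonant_aspect t"
    unfolding e resonant_aspect_eq_cot[OF t0 tl] by simp
qed

lemma resonance_ratio_unique:
  fixes p q p' q' :: nat
  assumes "p > 0" "q > 0" "p' > 0" "q' > 0"
    "real p / real q * cot (pi * real p / (2 * real (p + q)))
      = real p' / real q' * cot (pi * real p' / (2 * real (p' + q')))"
  shows "real p / real q = real p' / real q'"
proof -
  have "pi * real q / (2 * real (p + q)) = pi * real q' / (2 * real (p' + q'))"
    using resonant_aspect_inj resonant_aspect_rational[OF assms(1,2)] resonant_aspect_rational[OF assms(3,4)]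
      assms(5) by metis
  then have "real q * real (p' + q') = real q' * real (p + q)" using assms by (simp add: field_simps)
  then have "real q * real p' = real q' * real p" by (simp add: algebra_simps)
  then show ?thesis using assms by (simp add: field_simps)
qed

section \<open>The angle with the vertical\<close>

definition vert_angle :: "real \<Rightarrow> real \<times> real \<Rightarrow> real" where
  "vert_angle w z = (if side_of w (fst z) = 0 \<or> side_of w (fst z) = 2 then \<bar>snd z\<bar> else pi/2 - \<bar>snd z\<bar>)"

definition vert_ind :: "nat \<Rightarrow> real" where
  "vert_ind s = (if s = 1 \<or> s = 3 then 1 else 0)"

lemma abs_arcsin_sin: "\<bar>t\<bar> < pi/2 \<Longrightarrow> \<bar>arcsin (sin t)\<bar> = \<bar>t\<bar>"
  by (simp add: arcsin_sin)

lemma abs_arcsin_minus_sin: "\<bar>t\<bar> < pi/2 \<Longrightarrow> \<bar>arcsin (- sin t)\<bar> = \<bar>t\<bar>"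
  by (simp add: arcsin_minus arcsin_sin)

lemma abs_arcsin_cos:
  assumes "\<bar>t\<bar> < pi/2"
  shows "\<bar>arcsin (cos t)\<bar> = pi/2 - \<bar>t\<bar>"
proof -
  have "cos t = sin (pi/2 - \<bar>t\<bar>)" using cos_sin_eq[of "\<bar>t\<bar>"] by simp
  moreover have "arcsin (sin (pi/2 - \<bar>t\<bar>)) = pi/2 - \<bar>t\<bar>" using assms by (intro arcsin_sin) auto
  ultimately show ?thesis using assms by simp
qed

lemma abs_arcsin_minus_cos: "\<bar>t\<bar> < pi/2 \<Longrightarrow> \<bar>arcsin (- cos t)\<bar> = pi/2 - \<bar>t\<bar>"
  using abs_arcsin_cos[of t] by (simp add: arcsin_minus)

lemma vert_angle_billiard:
  assumes "z \<in> phase w"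
  shows "vert_angle w (billiard w z) = vert_angle w z"
proof -
  have t: "\<bar>snd z\<bar> < pi/2" using assms unfolding phase_def by simp
  have "snd (billiard w z) = (let n' = nrm (side_of w (fst (billiard w z))); d = dir w z in
      arcsin (fst n' * snd d - snd n' * fst d))"
    unfolding billiard_def Let_def by (simp add: algebra_simps)
  then show ?thesis
    using side_of_range[of w "fst z"] side_of_range[of w "fst (billiard w z)"]
    unfolding vert_angle_def Let_def dir_eq nrm_def
    by (auto simp: abs_arcsin_sin[OF t] abs_arcsin_minus_sin[OF t] abs_arcsin_cos[OF t] abs_arcsin_minus_cos[OF t])
qed

lemma vert_angle_billiard_lam:
  assumes "z \<in> phase w" "l > 0"
  shows "vert_angle w (billiard_lam w l z)
    = l * vert_angle w z + (1 - l) * (pi/2) * vert_ind (side_of w (fst (billiard w z)))"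
proof -
  have e: "billiard_lam w l z = (fst (billiard w z), l * snd (billiard w z))"
    unfolding billiard_lam_def R_lam_def by simp
  have b: "vert_angle w (billiard w z) = vert_angle w z" by (rule vert_angle_billiard[OF assms(1)])
  have j: "side_of w (fst (billiard w z)) \<in> {0,1,2,3}" by (rule side_of_range)
  show ?thesis
  proof (cases "side_of w (fst (billiard w z)) = 1 \<or> side_of w (fst (billiard w z)) = 3")
    case True
    then have "\<bar>snd (billiard w z)\<bar> = pi/2 - vert_angle w z" using b unfolding vert_angle_def by auto
    moreover have "vert_angle w (billiard_lam w l z) = pi/2 - l * \<bar>snd (billiard w z)\<bar>"
      using True assms(2) unfolding e vert_angle_def by (auto simp: abs_mult)
    ultimately have "vert_angle w (billiard_lam w l z) = pi/2 - l * (pi/2 - vert_angle w z)" by simp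
    then show ?thesis using True unfolding vert_ind_def by (simp add: algebra_simps diff_divide_distrib)
  next
    case False
    then have "\<bar>snd (billiard w z)\<bar> = vert_angle w z" using b j unfolding vert_angle_def by auto
    moreover have "vert_angle w (billiard_lam w l z) = l * \<bar>snd (billiard w z)\<bar>"
      using False j assms(2) unfolding e vert_angle_def by (auto simp: abs_mult)
    ultimately show ?thesis using False unfolding vert_ind_def by simp
  qed
qed

lemma vert_angle_dir:
  assumes "z \<in> phase w"
  shows "\<bar>fst (dir w z)\<bar> = sin (vert_angle w z)" "\<bar>snd (dir w z)\<bar> = cos (vert_angle w z)"
proof -
  have t: "\<bar>snd z\<bar> < pi/2" using assms unfolding phase_def by simp
  have s1: "\<bar>sin (snd z)\<bar> = sin \<bar>snd z\<bar>"
    using t sin_ge_zero[of "snd z"] sin_ge_zero[of "- snd z"] by (cases "snd z \<ge> 0") auto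
  have c1: "cos (snd z) = sin (pi/2 - \<bar>snd z\<bar>)" using cos_sin_eq[of "\<bar>snd z\<bar>"] by simp
  have s2: "\<bar>sin (snd z)\<bar> = cos (pi/2 - \<bar>snd z\<bar>)" using s1 sin_cos_eq[of "\<bar>snd z\<bar>"] by simp
  show "\<bar>fst (dir w z)\<bar> = sin (vert_angle w z)" "\<bar>snd (dir w z)\<bar> = cos (vert_angle w z)"
    using side_of_range[of w "fst z"] phase_cos_pos[OF assms] s1 c1 s2
    unfolding dir_eq Let_def vert_angle_def by auto
qed

lemma affine_recurrence_iter:
  fixes b c :: "nat \<Rightarrow> real"
  assumes "\<And>n. b (Suc n) = l * b n + c n"
  shows "b (n + m) = l^m * b n + (\<Sum>k<m. l^(m - 1 - k) * c (n + k))"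
proof (induction m)
  case (Suc m)
  have "b (n + Suc m) = l * b (n + m) + c (n + m)" using assms by simp
  also have "\<dots> = l^(Suc m) * b n + (\<Sum>k<m. l * (l^(m - 1 - k) * c (n + k))) + c (n + m)"
    using Suc by (simp add: algebra_simps sum_distrib_left)
  also have "(\<Sum>k<m. l * (l^(m - 1 - k) * c (n + k))) = (\<Sum>k<m. l^(Suc m - 1 - k) * c (n + k))"
    by (intro sum.cong refl) (auto simp: Suc_diff_Suc power_Suc[symmetric] simp del: power_Suc)
  finally show ?case by simp
qed simp

text \<open>Over one period of \<open>c\<close> the recurrence is an affine map of slope \<open>l\<^sup>L \<noteq> 1\<close>; a periodic
  solution starts at its unique fixed point.\<close>

lemma periodic_affine_recurrence:
  fixes b c :: "nat \<Rightarrow> real"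
  assumes rec: "\<And>n. b (Suc n) = l * b n + c n"
    and cp: "\<And>n. c (n + L) = c n" and L: "L > 0" and K: "K > 0"
    and bp: "\<And>n. b (n + K) = b n" and l: "l > 0" "l \<noteq> 1"
  shows "b 0 * (1 - l^L) = (\<Sum>k<L. l^(L - 1 - k) * c k)"
proof -
  define C where "C = (\<Sum>k<L. l^(L - 1 - k) * c k)"
  have cpm: "c (j * L + k) = c k" for j k
  proof (induction j)
    case (Suc j)
    have "c (Suc j * L + k) = c ((j * L + k) + L)" by (simp add: algebra_simps)
    then show ?case using cp Suc by simp
  qed simp
  have step: "b (Suc j * L) = l^L * b (j * L) + C" for j
    using affine_recurrence_iter[of b l c, OF rec, of "j * L" L] unfolding C_def cpm
    by (simp add: add.commute)
  define e where "e j = b (j * L) * (1 - l^L) - C" for j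
  have ee: "e (Suc j) = l^L * e j" for j
    unfolding e_def step by (simp add: algebra_simps)
  have eK: "e j = (l^L)^j * e 0" for j
    by (induction j) (auto simp: ee)
  have bK: "b (j * K) = b 0" for j
  proof (induction j)
    case (Suc j) then show ?case using bp[of "j * K"] by (simp add: add.commute)
  qed simp
  have "e K = e 0" unfolding e_def using bK[of L] by (simp add: mult.commute)
  then have "e 0 * (1 - (l^L)^K) = 0" using eK[of K] by (simp add: algebra_simps)
  moreover have "(l^L)^K \<noteq> 1"
  proof
    assume "(l^L)^K = 1"
    then have "l^(L*K) = 1" by (simp add: power_mult)
    moreover have "L * K > 0" using L K by simp
    ultimately have "l = 1" using l(1) power_less_one_iff[of l "L*K"] one_less_power[of l "L*K"]
      by (cases "l < 1"; cases "l > 1") auto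
    then show False using l by simp
  qed
  ultimately have "e 0 = 0" by simp
  then show ?thesis unfolding e_def C_def by simp
qed

lemma regular_phase: "regular w z \<Longrightarrow> z \<in> phase w"
  unfolding regular_def by simp

lemma periodic_phase: "periodic_pt w f x \<Longrightarrow> x \<in> phase w"
  unfolding periodic_pt_def regular_def by (metis funpow_0)

lemma itin_period:
  assumes "(f ^^ L) q = q"
  shows "itin w f q (m + L) = itin w f q m"
  using assms unfolding itin_def by (simp add: funpow_add)

lemma lam_periodic_vert_angle:
  assumes "periodic_pt w (billiard_lam w l) y" "itin w (billiard_lam w l) y = itin w (billiard w) q"
    "(billiard w ^^ L) q = q" "L > 0" "l > 0" "l \<noteq> 1"
  shows "vert_angle w y * (\<Sum>i<L. l^i)
    = (pi/2) * (\<Sum>k<L. l^(L - 1 - k) * vert_ind (itin w (billiard w) q (Suc k)))"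
proof -
  define f where "f = billiard_lam w l"
  obtain K where K: "K > 0" "(f ^^ K) y = y" and reg: "\<And>m. regular w ((f ^^ m) y)"
    using assms(1) unfolding periodic_pt_def f_def by auto
  define b where "b m = vert_angle w ((f ^^ m) y)" for m
  define c where "c m = (1 - l) * (pi/2) * vert_ind (itin w (billiard w) q (Suc m))" for m
  have rec: "b (Suc m) = l * b m + c m" for m
  proof -
    have "fst (f ((f ^^ m) y)) = fst (billiard w ((f ^^ m) y))"
      unfolding f_def billiard_lam_def R_lam_def by simp
    then have "side_of w (fst (billiard w ((f ^^ m) y))) = itin w (billiard w) q (Suc m)"
      using assms(2) fun_cong[OF assms(2), of "Suc m"] unfolding itin_def f_def by simp
    then show ?thesis
      unfolding b_def c_def funpow.simps comp_def f_def
      using vert_angle_billiard_lam[OF regular_phase[OF reg[of m, unfolded f_def]] assms(5)] by simp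
  qed
  have cp: "c (m + L) = c m" for m
    unfolding c_def using itin_period[OF assms(3), of w "Suc m"] by simp
  have bp: "b (m + K) = b m" for m
    unfolding b_def by (simp add: funpow_add K(2))
  have "b 0 * (1 - l^L) = (\<Sum>k<L. l^(L - 1 - k) * c k)"
    by (rule periodic_affine_recurrence[OF rec cp assms(4) K(1) bp assms(5,6)])
  moreover have "b 0 * (1 - l^L) = (1 - l) * (b 0 * (\<Sum>i<L. l^i))"
    by (simp add: one_diff_power_eq)
  moreover have "(\<Sum>k<L. l^(L - 1 - k) * c k)
      = (1 - l) * ((pi/2) * (\<Sum>k<L. l^(L - 1 - k) * vert_ind (itin w (billiard w) q (Suc k))))"
    unfolding c_def by (simp add: sum_distrib_left algebra_simps)
  ultimately show ?thesis using assms(6) unfolding b_def by simp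
qed

lemma strict_decseq_gt_limit:
  fixes x :: "nat \<Rightarrow> real"
  assumes "\<forall>n. x (Suc n) < x n" "x \<longlonglongrightarrow> a"
  shows "x n > a"
proof -
  have "decseq x" using assms(1) by (intro decseq_SucI) (simp add: less_imp_le)
  then have "a \<le> x (Suc n)" using decseq_ge assms(2) by blast
  then show ?thesis using assms(1)[rule_format, of n] by linarith
qed

text \<open>Only \<open>\<lambda>\<^sup>+\<close>-stability is needed: the limit \<open>\<lambda> \<rightarrow> 1\<close> of the fixed-point equation
  for the perturbed orbits yields the resonance \<open>\<beta> L = V \<pi>/2\<close>.\<close>

lemma plus_stable_vert_angle:
  assumes st: "lam_plus_stable w q" and L: "(billiard w ^^ L) q = q" "L > 0"
  shows "vert_angle w q * real L = (pi/2) * (\<Sum>k<L. vert_ind (itin w (billiard w) q (Suc k)))"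
proof -
  obtain lam y where d: "\<forall>n. lam (Suc n) < lam n" "lam \<longlonglongrightarrow> 1"
     "\<forall>n. periodic_pt w (billiard_lam w (lam n)) (y n)
        \<and> itin w (billiard_lam w (lam n)) (y n) = itin w (billiard w) q"
     "y \<longlonglongrightarrow> q"
    using st unfolding lam_plus_stable_def by blast
  define v where "v = (\<lambda>k. vert_ind (itin w (billiard w) q (Suc k)))"
  have gt1: "lam n > 1" for n using strict_decseq_gt_limit[OF d(1,2)] .
  have eq: "vert_angle w (y n) * (\<Sum>i<L. (lam n)^i) = (pi/2) * (\<Sum>k<L. (lam n)^(L - 1 - k) * v k)" for n
    using lam_periodic_vert_angle[of w "lam n" "y n" q L] d(3) L gt1[of n] unfolding v_def by auto
  have side: "side_of w (fst (y n)) = side_of w (fst q)" for n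
    using d(3) unfolding itin_def by (metis funpow_0)
  have "(\<lambda>n. \<bar>snd (y n)\<bar>) \<longlonglongrightarrow> \<bar>snd q\<bar>" by (intro tendsto_intros d(4))
  then have "(\<lambda>n. vert_angle w (y n)) \<longlonglongrightarrow> vert_angle w q"
    unfolding vert_angle_def side by (auto intro!: tendsto_intros)
  then have "(\<lambda>n. vert_angle w (y n) * (\<Sum>i<L. (lam n)^i)) \<longlonglongrightarrow> vert_angle w q * (\<Sum>i<L. 1^i)"
    by (intro tendsto_intros d(2))
  moreover have "(\<lambda>n. (pi/2) * (\<Sum>k<L. (lam n)^(L - 1 - k) * v k)) \<longlonglongrightarrow> (pi/2) * (\<Sum>k<L. 1^(L - 1 - k) * v k)"
    by (intro tendsto_intros d(2))
  ultimately have "vert_angle w q * (\<Sum>i<L. 1^i) = (pi/2) * (\<Sum>k<L. 1^(L - 1 - k) * v k)"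
    unfolding eq by (rule LIMSEQ_unique)
  then show ?thesis unfolding v_def by simp
qed

section \<open>Oblique orbits as clocks\<close>

abbreviation orb :: "real \<Rightarrow> real \<times> real \<Rightarrow> nat \<Rightarrow> real \<times> real" where
  "orb w x k \<equiv> (billiard w ^^ k) x"

lemma billiard_oblique_step:
  assumes w: "w > 0" and reg: "regular w z" and ob: "oblique w z"
  defines "V \<equiv> vert_time w z < horiz_time w z"
  shows "billiard w z \<in> phase w"
    "dir w (billiard w z) = (if V then (- fst (dir w z), snd (dir w z)) else (fst (dir w z), - snd (dir w z)))"
    "vert_time w (billiard w z) = (if V then w / \<bar>fst (dir w z)\<bar> else vert_time w z - horiz_time w z)"
    "horiz_time w (billiard w z) = (if V then horiz_time w z - vert_time w z else 1 / \<bar>snd (dir w z)\<bar>)"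
    "side_of w (fst (billiard w z))
      = (if V then (if fst (dir w z) > 0 then 1 else 3) else (if snd (dir w z) > 0 then 2 else 0))"
proof -
  have ph: "z \<in> phase w" using reg by (rule regular_phase)
  have "vert_time w z \<noteq> horiz_time w z" by (rule regular_wall_times_neq[OF reg ob])
  then have "V \<or> horiz_time w z < vert_time w z" unfolding V_def by linarith
  then show "billiard w z \<in> phase w"
    "dir w (billiard w z) = (if V then (- fst (dir w z), snd (dir w z)) else (fst (dir w z), - snd (dir w z)))"
    "vert_time w (billiard w z) = (if V then w / \<bar>fst (dir w z)\<bar> else vert_time w z - horiz_time w z)"
    "horiz_time w (billiard w z) = (if V then horiz_time w z - vert_time w z else 1 / \<bar>snd (dir w z)\<bar>)"
    "side_of w (fst (billiard w z))
      = (if V then (if fst (dir w z) > 0 then 1 else 3) else (if snd (dir w z) > 0 then 2 else 0))"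
    using billiard_vertical_bounce[OF w ph ob] billiard_horizontal_bounce[OF w ph ob]
    unfolding V_def by auto
qed

lemma orbit_abs_dir:
  assumes w: "w > 0" and reg: "\<And>n. regular w (orb w x n)" and ob: "oblique w x"
  shows "\<bar>fst (dir w (orb w x k))\<bar> = \<bar>fst (dir w x)\<bar> \<and> \<bar>snd (dir w (orb w x k))\<bar> = \<bar>snd (dir w x)\<bar>"
proof (induction k)
  case (Suc k)
  then have "oblique w (orb w x k)" using ob unfolding oblique_def by auto
  then show ?case using billiard_oblique_step(2)[OF w reg] Suc by simp
qed simp

lemma orbit_oblique:
  "w > 0 \<Longrightarrow> (\<And>n. regular w (orb w x n)) \<Longrightarrow> oblique w x \<Longrightarrow> oblique w (orb w x k)"
  using orbit_abs_dir[of w x k] unfolding oblique_def by auto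

definition vtimes :: "real \<Rightarrow> real \<times> real \<Rightarrow> nat \<Rightarrow> real" where
  "vtimes w x k = vert_time w (orb w x k)"

definition htimes :: "real \<Rightarrow> real \<times> real \<Rightarrow> nat \<Rightarrow> real" where
  "htimes w x k = horiz_time w (orb w x k)"

lemma orbit_step:
  fixes k :: nat
  assumes w: "w > 0" and reg: "\<And>n. regular w (orb w x n)" and ob: "oblique w x"
  defines "V \<equiv> vtimes w x k < htimes w x k"
  shows "dir w (orb w x (Suc k)) = (if V then (- fst (dir w (orb w x k)), snd (dir w (orb w x k)))
      else (fst (dir w (orb w x k)), - snd (dir w (orb w x k))))"
    "side_of w (fst (orb w x (Suc k))) = (if V then (if fst (dir w (orb w x k)) > 0 then 1 else 3)
      else (if snd (dir w (orb w x k)) > 0 then 2 else 0))"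
  using billiard_oblique_step[OF w reg orbit_oblique[OF w reg ob]]
  unfolding V_def vtimes_def htimes_def by simp_all

lemma orbit_wall_clock:
  assumes w: "w > 0" and reg: "\<And>n. regular w (orb w x n)" and ob: "oblique w x"
  shows "wall_clock (w / \<bar>fst (dir w x)\<bar>) (1 / \<bar>snd (dir w x)\<bar>) (vtimes w x) (htimes w x)"
  unfolding wall_clock_def vtimes_def htimes_def
proof
  fix k
  have obk: "oblique w (orb w x k)" by (rule orbit_oblique[OF w reg ob])
  note S = billiard_oblique_step[OF w reg obk]
  show "0 < vert_time w (orb w x k) \<and> vert_time w (orb w x k) \<le> w / \<bar>fst (dir w x)\<bar>
    \<and> 0 < horiz_time w (orb w x k) \<and> horiz_time w (orb w x k) \<le> 1 / \<bar>snd (dir w x)\<bar>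
    \<and> vert_time w (orb w x k) \<noteq> horiz_time w (orb w x k)
    \<and> vert_time w (orb w x (Suc k)) = (if vert_time w (orb w x k) < horiz_time w (orb w x k)
        then w / \<bar>fst (dir w x)\<bar> else vert_time w (orb w x k) - horiz_time w (orb w x k))
    \<and> horiz_time w (orb w x (Suc k)) = (if vert_time w (orb w x k) < horiz_time w (orb w x k)
        then horiz_time w (orb w x k) - vert_time w (orb w x k) else 1 / \<bar>snd (dir w x)\<bar>)"
    using wall_times_bounds[OF w regular_phase[OF reg] obk] regular_wall_times_neq[OF reg obk] S(3,4)
      orbit_abs_dir[OF w reg ob, of k] by simp
qed

lemma orbit_vert_ind:
  assumes w: "w > 0" and reg: "\<And>n. regular w (orb w x n)" and ob: "oblique w x"
  shows "vert_ind (itin w (billiard w) x (Suc k)) = (if vtimes w x k < htimes w x k then 1 else 0)"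
  using orbit_step(2)[OF w reg ob, of k] unfolding itin_def vert_ind_def by auto

lemma sum_vert_ind_eq_x_resets:
  assumes w: "w > 0" and reg: "\<And>n. regular w (orb w x n)" and ob: "oblique w x"
  shows "(\<Sum>k<L. vert_ind (itin w (billiard w) x (Suc k))) = real (x_resets (vtimes w x) (htimes w x) L)"
  unfolding x_resets_def of_nat_sum using orbit_vert_ind[OF w reg ob] by (intro sum.cong) auto

lemma orbit_period_balance:
  assumes w: "w > 0" and reg: "\<And>n. regular w (orb w x n)" and ob: "oblique w x"
    and L: "orb w x L = x" "L > 0"
  defines "V \<equiv> x_resets (vtimes w x) (htimes w x) L"
  shows "w / \<bar>fst (dir w x)\<bar> * real V = 1 / \<bar>snd (dir w x)\<bar> * real (L - V)" "0 < V" "V < L"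
proof -
  have "vtimes w x L = vtimes w x 0" "htimes w x L = htimes w x 0"
    unfolding vtimes_def htimes_def using L by auto
  note P = wall_clock_period_balance[OF orbit_wall_clock[OF w reg ob] this L(2), folded V_def]
  show "w / \<bar>fst (dir w x)\<bar> * real V = 1 / \<bar>snd (dir w x)\<bar> * real (L - V)" by (rule P(1))
  show "0 < V" using P(2) by (metis mult_zero_right of_nat_0 less_irrefl neq0_conv)
  have "1 / \<bar>snd (dir w x)\<bar> * real (L - V) > 0" using P by linarith
  then show "V < L" by (cases "V < L") auto
qed

lemma orbit_dir_sign:
  assumes w: "w > 0" and reg: "\<And>n. regular w (orb w x n)" and ob: "oblique w x"
  defines "V \<equiv> x_resets (vtimes w x) (htimes w x)"
  shows "fst (dir w (orb w x n)) = (-1)^(V n) * fst (dir w x)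
       \<and> snd (dir w (orb w x n)) = (-1)^(n - V n) * snd (dir w x)"
proof (induction n)
  case (Suc n)
  have c: "V n \<le> n" unfolding V_def by (rule x_resets_le)
  show ?case
  proof (cases "vtimes w x n < htimes w x n")
    case True
    then have "Suc n - V (Suc n) = n - V n" unfolding V_def by (simp add: x_resets_Suc)
    then show ?thesis using orbit_step(1)[OF w reg ob, of n] Suc True unfolding V_def by (simp add: x_resets_Suc)
  next
    case False
    then have "Suc n - V (Suc n) = Suc (n - V n)" using c unfolding V_def by (simp add: x_resets_Suc Suc_diff_le)
    then show ?thesis using orbit_step(1)[OF w reg ob, of n] Suc False unfolding V_def by (simp add: x_resets_Suc)
  qed
qed (simp add: V_def)

lemma itin_funpow: "itin w f ((f ^^ k) z) n = itin w f z (n + k)"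
  unfolding itin_def by (simp add: funpow_add)

lemma funpow_mult_period: "(f ^^ L) z = z \<Longrightarrow> (f ^^ (t * L)) z = z"
  by (induction t) (simp_all add: funpow_add)

lemma periodic_pt_funpow: "periodic_pt w f z \<Longrightarrow> periodic_pt w f ((f ^^ k) z)"
proof -
  assume "periodic_pt w f z"
  then obtain L where L: "L > 0" "(f ^^ L) z = z" and r: "\<And>n. regular w ((f ^^ n) z)"
    unfolding periodic_pt_def by blast
  have "(f ^^ L) ((f ^^ k) z) = (f ^^ k) ((f ^^ L) z)" by (metis funpow_add comp_apply add.commute)
  moreover have "regular w ((f ^^ n) ((f ^^ k) z))" for n using r[of "n + k"] by (simp add: funpow_add)
  ultimately show ?thesis unfolding periodic_pt_def using L by auto
qed

text \<open>If two orbits share one shifted itinerary, every shift of the first (periodic) one is a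
  shift of the second: go around the period often enough to pass the matching time.\<close>

lemma itin_shift_match:
  assumes p1: "periodic_pt w (billiard w) x1"
    and e: "itin w (billiard w) (orb w x1 m1) = itin w (billiard w) (orb w x2 m2)"
  shows "\<exists>k'. itin w (billiard w) (orb w x1 k) = itin w (billiard w) (orb w x2 k')"
proof -
  obtain L where L: "L > 0" "orb w x1 L = x1" using p1 unfolding periodic_pt_def by blast
  have "orb w x1 (k + m1 * L) = orb w x1 k"
    using funpow_mult_period[where f="billiard w" and L=L and z=x1 and t=m1] L by (simp add: funpow_add)
  moreover have km: "k + m1 * L \<ge> m1" using L by (simp add: trans_le_add2)
  define d where "d = k + m1 * L - m1"
  have "itin w (billiard w) (orb w x1 (k + m1 * L)) = itin w (billiard w) (orb w x2 (m2 + d))"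
  proof
    fix n
    have "itin w (billiard w) (orb w x1 (k + m1 * L)) n = itin w (billiard w) (orb w x1 m1) (n + d)"
      unfolding itin_funpow d_def using km by (simp add: algebra_simps)
    also have "\<dots> = itin w (billiard w) (orb w x2 (m2 + d)) n"
      unfolding e itin_funpow by (simp add: algebra_simps)
    finally show "itin w (billiard w) (orb w x1 (k + m1 * L)) n = itin w (billiard w) (orb w x2 (m2 + d)) n" .
  qed
  ultimately show ?thesis by auto
qed

lemma cyl_eq:
  assumes p1: "periodic_pt w (billiard w) x1" and p2: "periodic_pt w (billiard w) x2"
    and e: "itin w (billiard w) (orb w x1 m1) = itin w (billiard w) (orb w x2 m2)"
  shows "cyl w x1 = cyl w x2"
  unfolding cyl_def using itin_shift_match[OF p1 e] itin_shift_match[OF p2 e[symmetric]] by metis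

lemma mem_cyl_self: "periodic_pt w (billiard w) q \<Longrightarrow> q \<in> cyl w q"
  unfolding cyl_def by (auto intro!: exI[of _ 0])

lemma cyl_of_mem:
  assumes "x \<in> cyl w q" "periodic_pt w (billiard w) q"
  shows "cyl w x = cyl w q"
proof -
  obtain k where "periodic_pt w (billiard w) x" "itin w (billiard w) x = itin w (billiard w) (orb w q k)"
    using assms(1) unfolding cyl_def by blast
  then show ?thesis using cyl_eq[OF _ assms(2), of x 0 k] by simp
qed

section \<open>Ping-pong cylinders\<close>

lemma pingpong_hit_pt:
  assumes w: "w > 0" and z: "z \<in> phase w" and t: "snd z = 0"
  shows "hit_pt w z = (if side_of w (fst z) = 0 then (fst z, 1) else if side_of w (fst z) = 1 then (0, fst z - w)
      else if side_of w (fst z) = 2 then (2*w+1 - fst z, 0) else (w, 2*w+2 - fst z))"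
  using phase_cases[OF w z] w t
  by (elim disjE) (auto simp: hit_pt_def exit_time_def dir_eq Let_def)

lemma pingpong_step:
  assumes w: "w > 0" and z: "z \<in> phase w" and t: "snd z = 0"
  shows "billiard w z = (if side_of w (fst z) = 0 \<or> side_of w (fst z) = 2 then 2*w+1 - fst z else 3*w+2 - fst z, 0)
    \<and> side_of w (fst (billiard w z)) = (side_of w (fst z) + 2) mod 4
    \<and> billiard w z \<in> phase w \<and> \<not> is_corner_pt w (hit_pt w z)"
proof -
  have d: "dir w z = nrm (side_of w (fst z))" unfolding dir_eq nrm_def Let_def t by simp
  show ?thesis
    using phase_cases[OF w z] w t pingpong_hit_pt[OF w z t]
    by (elim disjE)
      (auto simp: billiard_def d Let_def arclen_def nrm_def is_corner_pt_def phase_def is_corner_s_def,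
       auto simp: side_of_def)
qed

lemma pingpong_orbit:
  assumes w: "w > 0" and z: "z \<in> phase w" and t: "snd z = 0"
  shows "orb w z n \<in> phase w \<and> snd (orb w z n) = 0 \<and> regular w (orb w z n)
     \<and> side_of w (fst (orb w z n)) = (side_of w (fst z) + 2 * n) mod 4"
proof (induction n)
  case 0 then show ?case using pingpong_step[OF w z t] z t side_of_range[of w "fst z"] unfolding regular_def by auto
next
  case (Suc n)
  define y where "y = orb w z n"
  have ph: "y \<in> phase w" "snd y = 0" and h: "side_of w (fst y) = (side_of w (fst z) + 2 * n) mod 4"
    using Suc unfolding y_def by auto
  note S = pingpong_step[OF w ph]
  have P1: "billiard w y \<in> phase w" and P2: "snd (billiard w y) = 0" using S by auto
  have "\<not> is_corner_pt w (hit_pt w (billiard w y))" using pingpong_step[OF w P1 P2] by blast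
  moreover have "side_of w (fst (billiard w y)) = (side_of w (fst y) + 2) mod 4" using S by blast
  then have "side_of w (fst (billiard w y)) = (side_of w (fst z) + 2 * Suc n) mod 4"
    unfolding h by presburger
  ultimately show ?case unfolding y_def regular_def using P1 P2 by (simp add: y_def[symmetric])
qed

lemma pingpong_period_two:
  assumes w: "w > 0" and z: "z \<in> phase w" and t: "snd z = 0"
  shows "orb w z 2 = z"
proof -
  note S = pingpong_step[OF w z t]
  have "billiard w z \<in> phase w" "snd (billiard w z) = 0" using S by auto
  note S2 = pingpong_step[OF w this]
  have "side_of w (fst z) \<in> {0,1,2,3}" by (rule side_of_range)
  then have "billiard w (billiard w z) = z" using S S2 t by (cases z) auto
  then show ?thesis by (simp add: numeral_eq_Suc)
qed

lemma pingpong_periodic: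
  assumes w: "w > 0" and z: "z \<in> phase w" and t: "snd z = 0"
  shows "periodic_pt w (billiard w) z"
  unfolding periodic_pt_def using pingpong_orbit[OF w z t] pingpong_period_two[OF w z t]
  by (auto intro!: exI[of _ 2])

lemma pingpong_itin:
  assumes w: "w > 0" and z: "z \<in> phase w" and t: "snd z = 0"
  shows "itin w (billiard w) z n = (side_of w (fst z) + 2 * n) mod 4"
  unfolding itin_def using pingpong_orbit[OF w z t] by blast

lemma pingpong_lam_orbit:
  assumes w: "w > 0" and z: "z \<in> phase w" and t: "snd z = 0"
  shows "(billiard_lam w l ^^ n) z = orb w z n"
proof (induction n)
  case (Suc n)
  have "snd (billiard w (orb w z n)) = 0" using pingpong_orbit[OF w z t, of "Suc n"] by simp
  then show ?case using Suc unfolding billiard_lam_def R_lam_def by (cases "billiard w (orb w z n)") simp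
qed simp

lemma pingpong_lam_periodic:
  assumes w: "w > 0" and z: "z \<in> phase w" and t: "snd z = 0"
  shows "periodic_pt w (billiard_lam w l) z \<and> itin w (billiard_lam w l) z = itin w (billiard w) z"
  using pingpong_periodic[OF w z t] unfolding periodic_pt_def itin_def pingpong_lam_orbit[OF w z t] by simp

text \<open>\<open>\<Phi>\<^sub>\<lambda>\<close> fixes every ping-pong orbit, so constant sequences witness both kinds of stability.\<close>

lemma pingpong_plus_stable:
  assumes w: "w > 0" and z: "z \<in> phase w" and t: "snd z = 0"
  shows "lam_plus_stable w z"
proof -
  define lam where "lam n = 1 + 1 / (real n + 1)" for n
  have "\<forall>n. lam (Suc n) < lam n" unfolding lam_def by (simp add: frac_less2)
  moreover have "(\<lambda>n. 1 / (real n + 1)) \<longlonglongrightarrow> 0"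
    using LIMSEQ_inverse_real_of_nat by (simp add: inverse_eq_divide add.commute)
  then have "lam \<longlonglongrightarrow> 1" unfolding lam_def using tendsto_add[of "\<lambda>_. 1" 1 sequentially] by fastforce
  ultimately show ?thesis
    unfolding lam_plus_stable_def using pingpong_periodic[OF w z t] pingpong_lam_periodic[OF w z t]
    by (intro conjI exI[of _ lam] exI[of _ "\<lambda>n. z"]) auto
qed

lemma pingpong_minus_stable:
  assumes w: "w > 0" and z: "z \<in> phase w" and t: "snd z = 0"
  shows "lam_minus_stable w z"
proof -
  define lam where "lam n = 1 - 1 / (real n + 2)" for n
  have "\<forall>n. lam n < lam (Suc n)" "\<forall>n. lam n > 0" unfolding lam_def by (simp_all add: frac_less2)
  moreover have "(\<lambda>n. 1 / (real (Suc n) + 1)) \<longlonglongrightarrow> 0"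
    using LIMSEQ_inverse_real_of_nat[THEN LIMSEQ_Suc] by (simp add: inverse_eq_divide add.commute)
  then have "(\<lambda>n. 1 - 1 / (real (Suc n) + 1)) \<longlonglongrightarrow> 1 - 0" by (intro tendsto_diff) auto
  then have "lam \<longlonglongrightarrow> 1" unfolding lam_def by (simp add: add.commute)
  ultimately show ?thesis
    unfolding lam_minus_stable_def using pingpong_periodic[OF w z t] pingpong_lam_periodic[OF w z t]
    by (intro conjI exI[of _ lam] exI[of _ "\<lambda>n. z"]) auto
qed

lemma pingpong_cyl_stable:
  assumes w: "w > 0" and C: "is_pingpong_cyl w C"
  shows "lam_stable_cyl w C"
proof -
  obtain q where q: "periodic_pt w (billiard w) q" "snd q = 0" "C = cyl w q"
    using C unfolding is_pingpong_cyl_def by blast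
  have ph: "q \<in> phase w" using q(1) by (rule periodic_phase)
  show ?thesis unfolding lam_stable_cyl_def is_cyl_def
    using q mem_cyl_self[OF q(1)] pingpong_plus_stable[OF w ph q(2)] pingpong_minus_stable[OF w ph q(2)] by blast
qed

lemma pingpong_cyl_eq:
  assumes w: "w > 0" and z1: "z1 \<in> phase w" "snd z1 = 0" and z2: "z2 \<in> phase w" "snd z2 = 0"
    and par: "even (side_of w (fst z1)) \<longleftrightarrow> even (side_of w (fst z2))"
  shows "cyl w z1 = cyl w z2"
proof -
  define k :: nat where "k = (if side_of w (fst z1) = side_of w (fst z2) then 0 else 1)"
  have "side_of w (fst z1) \<in> {0,1,2,3}" "side_of w (fst z2) \<in> {0,1,2,3}" by (rule side_of_range)+
  then have "(side_of w (fst z1) + 2 * n) mod 4 = (side_of w (fst z2) + 2 * (n + k)) mod 4" for n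
    using par unfolding k_def by (auto, presburger+)
  then have "itin w (billiard w) (orb w z1 0) = itin w (billiard w) (orb w z2 k)"
    by (auto simp: itin_funpow pingpong_itin[OF w z1] pingpong_itin[OF w z2])
  then show ?thesis by (rule cyl_eq[OF pingpong_periodic[OF w z1] pingpong_periodic[OF w z2]])
qed

lemma pingpong_cyls:
  assumes w: "w > 0"
  shows "{C. is_pingpong_cyl w C} = {cyl w (w / 2, 0), cyl w (w + 1/2, 0)}"
proof -
  define a where "a = (w / 2, 0 :: real)"
  define b where "b = (w + 1/2, 0 :: real)"
  have a: "a \<in> phase w" "snd a = 0" "side_of w (fst a) = 0"
    and b: "b \<in> phase w" "snd b = 0" "side_of w (fst b) = 1"
    using w unfolding a_def b_def phase_def is_corner_s_def side_of_def by auto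
  have "C = cyl w a \<or> C = cyl w b" if C: "is_pingpong_cyl w C" for C
  proof -
    obtain q where q: "periodic_pt w (billiard w) q" "snd q = 0" "C = cyl w q"
      using C unfolding is_pingpong_cyl_def by blast
    have ph: "q \<in> phase w" using q(1) by (rule periodic_phase)
    show ?thesis
      using pingpong_cyl_eq[OF w ph q(2) a(1,2)] pingpong_cyl_eq[OF w ph q(2) b(1,2)] a(3) b(3) q(3) by auto
  qed
  moreover have "is_pingpong_cyl w (cyl w a)" "is_pingpong_cyl w (cyl w b)"
    unfolding is_pingpong_cyl_def using pingpong_periodic[OF w] a b by blast+
  ultimately show ?thesis unfolding a_def b_def by blast
qed

lemma pingpong_cyls_distinct:
  assumes w: "w > 0"
  shows "cyl w (w / 2, 0) \<noteq> cyl w (w + 1/2, 0)"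
proof
  define a where "a = (w / 2, 0 :: real)"
  define b where "b = (w + 1/2, 0 :: real)"
  have a: "a \<in> phase w" "snd a = 0" "side_of w (fst a) = 0"
    and b: "b \<in> phase w" "snd b = 0" "side_of w (fst b) = 1"
    using w unfolding a_def b_def phase_def is_corner_s_def side_of_def by auto
  assume "cyl w (w / 2, 0) = cyl w (w + 1/2, 0)"
  then have "a \<in> cyl w b" using mem_cyl_self[OF pingpong_periodic[OF w a(1,2)]] unfolding a_def b_def by simp
  then obtain k where k: "itin w (billiard w) a = itin w (billiard w) (orb w b k)"
    unfolding cyl_def by blast
  have "itin w (billiard w) a 0 = 0" using pingpong_itin[OF w a(1,2)] a(3) by simp
  moreover have "itin w (billiard w) (orb w b k) 0 = (1 + 2 * k) mod 4"
    unfolding itin_funpow using pingpong_itin[OF w b(1,2)] b(3) by simp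
  moreover have "(1 + 2 * k) mod 4 \<noteq> (0::nat)" by presburger
  ultimately show False using k by simp
qed

lemma card_pingpong_cyls: "w > 0 \<Longrightarrow> card {C. is_pingpong_cyl w C} = 2"
  using pingpong_cyls pingpong_cyls_distinct by simp

lemma not_oblique_pingpong:
  assumes z: "z \<in> phase w" and n: "\<not> oblique w z"
  shows "snd z = 0"
proof -
  have "\<bar>snd z\<bar> < pi/2" using z unfolding phase_def by simp
  then have "- pi < snd z" "snd z < pi" using pi_gt_zero by (simp_all add: abs_less_iff)
  moreover have "sin (snd z) = 0"
    using n phase_cos_pos[OF z] side_of_range[of w "fst z"] unfolding oblique_def dir_eq Let_def
    by (auto split: if_splits)
  ultimately show ?thesis using sin_eq_0_pi by blast
qed

lemma stable_oblique_cyl_mem: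
  assumes C: "lam_stable_cyl w C" "\<not> is_pingpong_cyl w C" and x: "x \<in> C"
  shows "periodic_pt w (billiard w) x \<and> oblique w x \<and> cyl w x = C"
proof -
  obtain q where q: "periodic_pt w (billiard w) q" "C = cyl w q"
    using C(1) unfolding lam_stable_cyl_def is_cyl_def by blast
  have px: "periodic_pt w (billiard w) x" using x q unfolding cyl_def by blast
  have cx: "cyl w x = C" using cyl_of_mem[of x w q] x q by simp
  have "oblique w x"
  proof (rule ccontr)
    assume "\<not> oblique w x"
    then have "snd x = 0" using not_oblique_pingpong periodic_phase[OF px] by blast
    then show False using C(2) px cx unfolding is_pingpong_cyl_def by blast
  qed
  then show ?thesis using px cx by simp
qed

lemma plus_stable_resonance:
  assumes w: "w > 0" and st: "lam_plus_stable w q" and ob: "oblique w q"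
    and L: "orb w q L = q" "L > 0"
  defines "V \<equiv> x_resets (vtimes w q) (htimes w q) L"
  shows "w = real (L - V) / real V * cot (pi * real (L - V) / (2 * real ((L - V) + V)))"
    "\<bar>snd (dir w q)\<bar> / \<bar>fst (dir w q)\<bar> = real (L - V) / (real V * w)"
proof -
  have reg: "\<And>n. regular w (orb w q n)" using st unfolding lam_plus_stable_def periodic_pt_def by blast
  define H where "H = L - V"
  have GP: "w / \<bar>fst (dir w q)\<bar> * real V = 1 / \<bar>snd (dir w q)\<bar> * real H" "V > 0" "V < L"
    using orbit_period_balance[OF w reg ob L] unfolding V_def H_def by auto
  have HL: "H + V = L" using GP unfolding H_def by auto
  define \<beta> where "\<beta> = vert_angle w q"
  have "\<beta> * real L = (pi/2) * real V"
    using plus_stable_vert_angle[OF st L] sum_vert_ind_eq_x_resets[OF w reg ob, of L]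
    unfolding V_def \<beta>_def by simp
  then have be: "\<beta> = pi * real V / (2 * real L)" using L(2) by (simp add: field_simps)
  have "real H = real L - real V" using GP(3) unfolding H_def by simp
  then have "pi * real H / (2 * real (H + V)) = pi/2 - \<beta>"
    unfolding HL be using L(2) by (simp add: field_simps flip: distrib_left)
  moreover have "cos (pi/2 - \<beta>) = sin \<beta>" "sin (pi/2 - \<beta>) = cos \<beta>"
    using sin_cos_eq[of \<beta>] cos_sin_eq[of \<beta>] by simp_all
  ultimately have ct: "cot (pi * real H / (2 * real (H + V))) = \<bar>fst (dir w q)\<bar> / \<bar>snd (dir w q)\<bar>"
    unfolding cot_def vert_angle_dir[OF regular_phase[OF reg[of 0]], simplified] \<beta>_def by simp
  have a0: "\<bar>fst (dir w q)\<bar> > 0" "\<bar>snd (dir w q)\<bar> > 0" using ob unfolding oblique_def by auto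
  have key: "w * real V * \<bar>snd (dir w q)\<bar> = real H * \<bar>fst (dir w q)\<bar>"
    using GP(1) a0 by (simp add: field_simps)
  show "w = real (L - V) / real V * cot (pi * real (L - V) / (2 * real ((L - V) + V)))"
    unfolding H_def[symmetric] ct using key a0 GP(2) by (simp add: field_simps)
  show "\<bar>snd (dir w q)\<bar> / \<bar>fst (dir w q)\<bar> = real (L - V) / (real V * w)"
    unfolding H_def[symmetric] using key a0 GP(2) w by (simp add: field_simps)
qed

lemma stable_oblique_cyl_resonant:
  assumes w: "w > 0" and C: "lam_stable_cyl w C" "\<not> is_pingpong_cyl w C"
  shows "\<exists>p q :: nat. p > 0 \<and> q > 0 \<and> w = real p / real q * cot (pi * real p / (2 * real (p + q)))"
proof -
  obtain x where x: "x \<in> C" "lam_plus_stable w x" using C(1) unfolding lam_stable_cyl_def by blast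
  have S: "periodic_pt w (billiard w) x" "oblique w x" using stable_oblique_cyl_mem[OF C x(1)] by auto
  obtain L where L: "L > 0" "orb w x L = x" using S(1) unfolding periodic_pt_def by blast
  have reg: "\<And>n. regular w (orb w x n)" using S(1) unfolding periodic_pt_def by blast
  show ?thesis
    using plus_stable_resonance(1)[OF w x(2) S(2) L(2,1)] orbit_period_balance(2,3)[OF w reg S(2) L(2,1)]
    by (intro exI[of _ "L - x_resets (vtimes w x) (htimes w x) L"] exI[of _ "x_resets (vtimes w x) (htimes w x) L"])
      auto
qed

lemma sum_shift_periodic:
  fixes f :: "nat \<Rightarrow> real"
  assumes "\<And>n. f (n + K) = f n"
  shows "(\<Sum>k<K. f (k + m)) = (\<Sum>k<K. f k)"
proof (induction m)
  case (Suc m)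
  have "(\<Sum>k<K. f (k + Suc m)) = (\<Sum>k<Suc K. f (k + m)) - f m"
    by (simp add: sum.lessThan_Suc_shift del: sum.lessThan_Suc)
  also have "\<dots> = (\<Sum>k<K. f (k + m)) + f (K + m) - f m" by simp
  also have "f (K + m) = f m" using assms[of m] by (simp add: add.commute)
  finally show ?case using Suc by simp
qed simp

text \<open>All points of a stable cylinder share its itinerary up to shift, hence the same number of
  vertical hits over a common period; the resonance at a \<open>\<lambda>\<^sup>+\<close>-stable point then fixes the slope
  everywhere on the cylinder.\<close>

lemma stable_oblique_cyl_slope:
  assumes w: "w > 0" and C: "lam_stable_cyl w C" "\<not> is_pingpong_cyl w C" and x: "x \<in> C"
    and pq: "p > 0" "q > 0" "w = real p / real q * cot (pi * real p / (2 * real (p + q)))"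
  shows "\<bar>snd (dir w x)\<bar> / \<bar>fst (dir w x)\<bar> = real p / (real q * w)"
proof -
  obtain s where s: "s \<in> C" "lam_plus_stable w s" using C(1) unfolding lam_stable_cyl_def by blast
  have Ss: "periodic_pt w (billiard w) s" "oblique w s" using stable_oblique_cyl_mem[OF C s(1)] by auto
  have Sx: "periodic_pt w (billiard w) x" "oblique w x" "cyl w x = C" using stable_oblique_cyl_mem[OF C x] by auto
  obtain Ls where Ls: "Ls > 0" "orb w s Ls = s" using Ss(1) unfolding periodic_pt_def by blast
  obtain Lx where Lx: "Lx > 0" "orb w x Lx = x" using Sx(1) unfolding periodic_pt_def by blast
  define K where "K = Lx * Ls"
  have K0: "K > 0" unfolding K_def using Ls Lx by simp
  have Kx: "orb w x K = x"
    unfolding K_def using funpow_mult_period[where f="billiard w" and L=Lx and z=x and t=Ls] Lx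
    by (simp add: mult.commute)
  have Ks: "orb w s K = s"
    unfolding K_def using funpow_mult_period[where f="billiard w" and L=Ls and z=s and t=Lx] Ls by simp
  have regs: "\<And>n. regular w (orb w s n)" using Ss(1) unfolding periodic_pt_def by blast
  have regx: "\<And>n. regular w (orb w x n)" using Sx(1) unfolding periodic_pt_def by blast
  obtain k0 where k0: "itin w (billiard w) s = itin w (billiard w) (orb w x k0)"
    using s(1) Sx(3) unfolding cyl_def by blast
  define f where "f j = vert_ind (itin w (billiard w) x (Suc j))" for j
  have fp: "f (n + K) = f n" for n unfolding f_def using itin_period[OF Kx, of w "Suc n"] by simp
  define V where "V = x_resets (vtimes w x) (htimes w x) K"
  have "real (x_resets (vtimes w s) (htimes w s) K) = (\<Sum>k<K. vert_ind (itin w (billiard w) s (Suc k)))"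
    using sum_vert_ind_eq_x_resets[OF w regs Ss(2)] by simp
  also have "\<dots> = (\<Sum>k<K. f (k + k0))" unfolding k0 itin_funpow f_def by simp
  also have "\<dots> = (\<Sum>k<K. f k)" by (rule sum_shift_periodic[of f K, OF fp])
  also have "\<dots> = real V" unfolding f_def V_def using sum_vert_ind_eq_x_resets[OF w regx Sx(2)] by simp
  finally have VV: "x_resets (vtimes w s) (htimes w s) K = V" by simp
  note Gx = orbit_period_balance[OF w regx Sx(2) Kx K0, folded V_def]
  have "real (K - V) / real V = real p / real q"
    using resonance_ratio_unique[of "K - V" V p q] plus_stable_resonance(1)[OF w s(2) Ss(2) Ks K0] Gx pq
    unfolding VV by simp
  moreover have "\<bar>fst (dir w x)\<bar> > 0" "\<bar>snd (dir w x)\<bar> > 0" using Sx(2) unfolding oblique_def by auto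
  then have "\<bar>snd (dir w x)\<bar> / \<bar>fst (dir w x)\<bar> = real (K - V) / real V / w"
    using Gx(1,2) w by (simp add: field_simps)
  ultimately show ?thesis by simp
qed

section \<open>Counting the stable oblique cylinders\<close>

definition normal_pt :: "real \<Rightarrow> real \<Rightarrow> real \<times> real \<Rightarrow> bool" where
  "normal_pt w u z \<longleftrightarrow> vert_time w z = w / \<bar>fst (dir w z)\<bar> \<and> 0 < horiz_time w z \<and> horiz_time w z < u
     \<and> side_of w (fst z) = (if fst (dir w z) < 0 then 1 else 3)"

lemma normal_pt_after_vertical_bounce:
  assumes w: "w > 0" and reg: "\<And>n. regular w (orb w x n)" and ob: "oblique w x"
    and j: "vtimes w x j < htimes w x j" "0 < htimes w x (Suc j)" "htimes w x (Suc j) < u"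
  shows "normal_pt w u (orb w x (Suc j))"
proof -
  have obj: "oblique w (orb w x j)" by (rule orbit_oblique[OF w reg ob])
  note S = billiard_oblique_step[OF w reg obj]
  have "vert_time w (orb w x j) < horiz_time w (orb w x j)" using j(1) unfolding vtimes_def htimes_def .
  then show ?thesis using S j(2,3) obj unfolding normal_pt_def htimes_def oblique_def by auto
qed

lemma orbit_normal_pt:
  assumes w: "w > 0" and reg: "\<And>n. regular w (orb w x n)" and ob: "oblique w x"
    and A: "w / \<bar>fst (dir w x)\<bar> = real N * u" and B: "1 / \<bar>snd (dir w x)\<bar> = real M * u" and u: "u > 0"
    and NM: "N > 0" "M > 0" "coprime N M"
  shows "\<exists>j. normal_pt w u (orb w x (Suc j))"
  using wall_clock_normal_time[OF orbit_wall_clock[OF w reg ob] A B u NM]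
    normal_pt_after_vertical_bounce[OF w reg ob] by blast

lemma normal_pt_return:
  assumes w: "w > 0" and reg: "\<And>n. regular w (orb w z n)" and ob: "oblique w z"
    and A: "w / \<bar>fst (dir w z)\<bar> = real N * u" and B: "1 / \<bar>snd (dir w z)\<bar> = real M * u" and u: "u > 0"
    and NM: "N > 0" "M > 0" and nz: "normal_pt w u z"
  shows "\<exists>j. normal_pt w u (orb w z (Suc j)) \<and> horiz_time w (orb w z (Suc j)) = horiz_time w z
     \<and> fst (dir w (orb w z (Suc j))) = (-1)^M * fst (dir w z)
     \<and> snd (dir w (orb w z (Suc j))) = (-1)^N * snd (dir w z)"
proof -
  have X0: "vtimes w z 0 = w / \<bar>fst (dir w z)\<bar>" and Y0: "0 < htimes w z 0" "htimes w z 0 < u"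
    using nz unfolding normal_pt_def vtimes_def htimes_def by auto
  obtain j where j: "vtimes w z j < htimes w z j" "x_resets (vtimes w z) (htimes w z) (Suc j) = M"
     "Suc j - x_resets (vtimes w z) (htimes w z) (Suc j) = N" "htimes w z (Suc j) = htimes w z 0"
    using wall_clock_return[OF orbit_wall_clock[OF w reg ob] A B u NM X0 Y0] by blast
  have "normal_pt w u (orb w z (Suc j))"
    using normal_pt_after_vertical_bounce[OF w reg ob j(1)] j(4) Y0 by simp
  then show ?thesis
    using orbit_dir_sign[OF w reg ob, of "Suc j"] j(2,3,4) unfolding htimes_def by (intro exI[of _ j]) simp
qed

text \<open>From a normal point the reset order is \<open>N (k+1) \<le> l M\<close>, independent of the point, so the
  itinerary is determined by the signs of the direction.\<close>

lemma normal_pts_same_itin: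
  assumes w: "w > 0" and reg1: "\<And>n. regular w (orb w z1 n)" and reg2: "\<And>n. regular w (orb w z2 n)"
    and ob1: "oblique w z1" and ob2: "oblique w z2"
    and a: "\<bar>fst (dir w z2)\<bar> = \<bar>fst (dir w z1)\<bar>" "\<bar>snd (dir w z2)\<bar> = \<bar>snd (dir w z1)\<bar>"
    and A: "w / \<bar>fst (dir w z1)\<bar> = real N * u" and B: "1 / \<bar>snd (dir w z1)\<bar> = real M * u" and u: "u > 0"
    and n1: "normal_pt w u z1" and n2: "normal_pt w u z2"
    and s1: "fst (dir w z1) > 0 \<longleftrightarrow> fst (dir w z2) > 0" and s2: "snd (dir w z1) > 0 \<longleftrightarrow> snd (dir w z2) > 0"
  shows "itin w (billiard w) z1 = itin w (billiard w) z2"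
proof -
  have c1: "wall_clock (w / \<bar>fst (dir w z1)\<bar>) (1 / \<bar>snd (dir w z1)\<bar>) (vtimes w z1) (htimes w z1)"
    by (rule orbit_wall_clock[OF w reg1 ob1])
  have c2: "wall_clock (w / \<bar>fst (dir w z1)\<bar>) (1 / \<bar>snd (dir w z1)\<bar>) (vtimes w z2) (htimes w z2)"
    using orbit_wall_clock[OF w reg2 ob2] unfolding a .
  have "vtimes w z1 0 + real k * (w / \<bar>fst (dir w z1)\<bar>) < htimes w z1 0 + real l * (1 / \<bar>snd (dir w z1)\<bar>)
    \<longleftrightarrow> vtimes w z2 0 + real k * (w / \<bar>fst (dir w z1)\<bar>) < htimes w z2 0 + real l * (1 / \<bar>snd (dir w z1)\<bar>)"
    for k l
    using normal_start_order[OF A B u, of "vtimes w z1 0" "htimes w z1 0" k l]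
      normal_start_order[OF A B u, of "vtimes w z2 0" "htimes w z2 0" k l] n1 n2 a
    unfolding normal_pt_def vtimes_def htimes_def by simp
  then have ord: "vtimes w z1 n < htimes w z1 n \<longleftrightarrow> vtimes w z2 n < htimes w z2 n" for n
    by (intro wall_clock_same_order[OF c1 c2]) blast
  have signs: "(fst (dir w (orb w z1 n)) > 0 \<longleftrightarrow> fst (dir w (orb w z2 n)) > 0)
     \<and> (snd (dir w (orb w z1 n)) > 0 \<longleftrightarrow> snd (dir w (orb w z2 n)) > 0)" for n
  proof (induction n)
    case (Suc n)
    have "oblique w (orb w z1 n)" "oblique w (orb w z2 n)"
      using orbit_oblique[OF w reg1 ob1] orbit_oblique[OF w reg2 ob2] by auto
    then show ?case
      using Suc orbit_step(1)[OF w reg1 ob1, of n] orbit_step(1)[OF w reg2 ob2, of n] ord[of n]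
      unfolding oblique_def by (auto simp del: funpow.simps)
  qed (use s1 s2 in simp)
  have "side_of w (fst (orb w z1 n)) = side_of w (fst (orb w z2 n))" for n
  proof (cases n)
    case 0 then show ?thesis using n1 n2 s1 ob1 ob2 unfolding normal_pt_def oblique_def by auto
  next
    case (Suc m) then show ?thesis
      using orbit_step(2)[OF w reg1 ob1, of m] orbit_step(2)[OF w reg2 ob2, of m] ord[of m] signs[of m]
      by (simp del: funpow.simps)
  qed
  then show ?thesis unfolding itin_def by blast
qed

text \<open>The sign pattern of a direction modulo the flip \<open>(dx, dy) \<mapsto> ((-1)\<^sup>M dx, (-1)\<^sup>N dy)\<close>; as
  \<open>M\<close> and \<open>N\<close> are not both even, this flip is nontrivial and there are exactly two classes.\<close>

definition sign_class :: "nat \<Rightarrow> nat \<Rightarrow> real \<times> real \<Rightarrow> bool" where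
  "sign_class M N d = (if odd M \<and> odd N then (fst d > 0 \<longleftrightarrow> snd d > 0)
      else if odd M then snd d > 0 else fst d > 0)"

lemma sign_class_flip:
  fixes d1 d2 :: "real \<times> real"
  assumes "\<not> (even M \<and> even N)" "sign_class M N d1 = sign_class M N d2" "fst d1 \<noteq> 0" "snd d1 \<noteq> 0"
    "\<not> ((fst d1 > 0 \<longleftrightarrow> fst d2 > 0) \<and> (snd d1 > 0 \<longleftrightarrow> snd d2 > 0))"
  shows "((-1)^M * fst d1 > 0 \<longleftrightarrow> fst d2 > 0) \<and> ((-1)^N * snd d1 > 0 \<longleftrightarrow> snd d2 > 0)"
  using assms unfolding sign_class_def
  by (cases "even M"; cases "even N") (auto simp: zero_less_mult_iff)

lemma normal_pts_same_cyl:
  assumes w: "w > 0" and p1: "periodic_pt w (billiard w) z1" and p2: "periodic_pt w (billiard w) z2"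
    and ob1: "oblique w z1" and ob2: "oblique w z2"
    and a: "\<bar>fst (dir w z2)\<bar> = \<bar>fst (dir w z1)\<bar>" "\<bar>snd (dir w z2)\<bar> = \<bar>snd (dir w z1)\<bar>"
    and A: "w / \<bar>fst (dir w z1)\<bar> = real N * u" and B: "1 / \<bar>snd (dir w z1)\<bar> = real M * u" and u: "u > 0"
    and NM: "N > 0" "M > 0" "coprime N M"
    and n1: "normal_pt w u z1" and n2: "normal_pt w u z2"
    and cls: "sign_class M N (dir w z1) = sign_class M N (dir w z2)"
  shows "cyl w z1 = cyl w z2"
proof -
  have reg1: "\<And>n. regular w (orb w z1 n)" and reg2: "\<And>n. regular w (orb w z2 n)"
    using p1 p2 unfolding periodic_pt_def by blast+
  show ?thesis
  proof (cases "(fst (dir w z1) > 0 \<longleftrightarrow> fst (dir w z2) > 0) \<and> (snd (dir w z1) > 0 \<longleftrightarrow> snd (dir w z2) > 0)")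
    case True
    then have "itin w (billiard w) z1 = itin w (billiard w) z2"
      using normal_pts_same_itin[OF w reg1 reg2 ob1 ob2 a A B u n1 n2] by blast
    then show ?thesis using cyl_eq[OF p1 p2, of 0 0] by simp
  next
    case False
    obtain j where j: "normal_pt w u (orb w z1 (Suc j))"
        "fst (dir w (orb w z1 (Suc j))) = (-1)^M * fst (dir w z1)"
        "snd (dir w (orb w z1 (Suc j))) = (-1)^N * snd (dir w z1)"
      using normal_pt_return[OF w reg1 ob1 A B u NM(1,2) n1] by blast
    define z1' where "z1' = orb w z1 (Suc j)"
    have p1': "periodic_pt w (billiard w) z1'" unfolding z1'_def by (rule periodic_pt_funpow[OF p1])
    have reg1': "\<And>n. regular w (orb w z1' n)" using p1' unfolding periodic_pt_def by blast
    have ob1': "oblique w z1'" unfolding z1'_def by (rule orbit_oblique[OF w reg1 ob1])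
    have "\<not> (even M \<and> even N)" using NM(3) coprime_common_divisor[of N M 2] by auto
    then have s: "(fst (dir w z1') > 0 \<longleftrightarrow> fst (dir w z2) > 0) \<and> (snd (dir w z1') > 0 \<longleftrightarrow> snd (dir w z2) > 0)"
      using sign_class_flip[OF _ cls _ _ False] ob1 j(2,3) unfolding z1'_def oblique_def by simp
    have a': "\<bar>fst (dir w z1')\<bar> = \<bar>fst (dir w z1)\<bar>" "\<bar>snd (dir w z1')\<bar> = \<bar>snd (dir w z1)\<bar>"
      unfolding z1'_def j(2,3) by (simp_all add: abs_mult)
    have "itin w (billiard w) z1' = itin w (billiard w) z2"
      using normal_pts_same_itin[where N=N and M=M, OF w reg1' reg2 ob1' ob2 _ _ _ _ u j(1)[folded z1'_def] n2]
        s a a' A B by simp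
    then show ?thesis using cyl_eq[OF p1 p2, of "Suc j" 0] unfolding z1'_def by simp
  qed
qed

lemma abs_dir_of_slope:
  assumes "\<bar>snd (dir w x)\<bar> / \<bar>fst (dir w x)\<bar> = \<rho>" "fst (dir w x) \<noteq> 0"
  shows "\<bar>fst (dir w x)\<bar> = 1 / sqrt (1 + \<rho>\<^sup>2)" "\<bar>snd (dir w x)\<bar> = \<rho> * \<bar>fst (dir w x)\<bar>"
proof -
  show s: "\<bar>snd (dir w x)\<bar> = \<rho> * \<bar>fst (dir w x)\<bar>" using assms by (simp add: field_simps)
  have "(fst (dir w x))\<^sup>2 + (\<rho> * \<bar>fst (dir w x)\<bar>)\<^sup>2 = 1"
    using dir_norm_sq[of w x] unfolding s[symmetric] by simp
  then have h: "\<bar>fst (dir w x)\<bar>\<^sup>2 * (1 + \<rho>\<^sup>2) = 1" by (simp add: algebra_simps power_mult_distrib)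
  have "1 + \<rho>\<^sup>2 > 0" by (simp add: add_pos_nonneg)
  then have "\<bar>fst (dir w x)\<bar>\<^sup>2 = 1 / (1 + \<rho>\<^sup>2)" using h by (simp add: field_simps)
  then show "\<bar>fst (dir w x)\<bar> = 1 / sqrt (1 + \<rho>\<^sup>2)"
    by (metis abs_abs real_sqrt_abs real_sqrt_divide real_sqrt_one)
qed

lemma stable_oblique_cyl_normal_pt:
  assumes w: "w > 0" and C: "lam_stable_cyl w C" "\<not> is_pingpong_cyl w C"
    and dC: "\<And>x. x \<in> C \<Longrightarrow> \<bar>fst (dir w x)\<bar> = a \<and> \<bar>snd (dir w x)\<bar> = b"
    and A: "w / a = real N * u" and B: "1 / b = real M * u" and u: "u > 0"
    and NM: "N > 0" "M > 0" "coprime N M"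
  shows "\<exists>z. periodic_pt w (billiard w) z \<and> oblique w z \<and> cyl w z = C \<and> normal_pt w u z
    \<and> \<bar>fst (dir w z)\<bar> = a \<and> \<bar>snd (dir w z)\<bar> = b"
proof -
  obtain x where x: "x \<in> C" using C(1) unfolding lam_stable_cyl_def by blast
  have Sx: "periodic_pt w (billiard w) x" "oblique w x" "cyl w x = C"
    using stable_oblique_cyl_mem[OF C x] by auto
  have reg: "\<And>n. regular w (orb w x n)" using Sx(1) unfolding periodic_pt_def by blast
  obtain j where j: "normal_pt w u (orb w x (Suc j))"
    using orbit_normal_pt[OF w reg Sx(2) _ _ u NM] A B dC[OF x] by auto
  define z where "z = orb w x (Suc j)"
  have pz: "periodic_pt w (billiard w) z" unfolding z_def by (rule periodic_pt_funpow[OF Sx(1)])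
  moreover have "cyl w z = C" using cyl_eq[OF pz Sx(1), of 0 "Suc j"] Sx(3) unfolding z_def by simp
  moreover have "oblique w z" unfolding z_def by (rule orbit_oblique[OF w reg Sx(2)])
  moreover have "\<bar>fst (dir w z)\<bar> = a \<and> \<bar>snd (dir w z)\<bar> = b"
    using orbit_abs_dir[OF w reg Sx(2), of "Suc j"] dC[OF x] unfolding z_def by simp
  ultimately show ?thesis using j unfolding z_def by blast
qed

lemma stable_oblique_cyl_abs_dir:
  assumes w: "w > 0" and C: "lam_stable_cyl w C" "\<not> is_pingpong_cyl w C" and x: "x \<in> C"
    and pq: "p > 0" "q > 0" "w = real p / real q * cot (pi * real p / (2 * real (p + q)))"
  defines "\<rho> \<equiv> real p / (real q * w)"
  shows "\<bar>fst (dir w x)\<bar> = 1 / sqrt (1 + \<rho>\<^sup>2) \<and> \<bar>snd (dir w x)\<bar> = \<rho> / sqrt (1 + \<rho>\<^sup>2)"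
proof -
  have "\<bar>snd (dir w x)\<bar> / \<bar>fst (dir w x)\<bar> = \<rho>"
    unfolding \<rho>_def by (rule stable_oblique_cyl_slope[OF w C x pq])
  moreover have "fst (dir w x) \<noteq> 0" using stable_oblique_cyl_mem[OF C x] unfolding oblique_def by simp
  ultimately show ?thesis using abs_dir_of_slope by (metis times_divide_eq_right mult_1_right)
qed

lemma obtain_coprime_factors:
  fixes p q :: nat
  assumes "p > 0" "q > 0"
  obtains N M g where "N > 0" "M > 0" "g > 0" "coprime N M" "p = N * g" "q = M * g"
proof
  show "coprime (p div gcd p q) (q div gcd p q)" using assms by (intro div_gcd_coprime) auto
  show "p = p div gcd p q * gcd p q" "q = q div gcd p q * gcd p q" by simp_all
  show "p div gcd p q > 0" "q div gcd p q > 0" using assms by (simp_all add: div_greater_zero_iff)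
qed (use assms in simp)

lemma stable_oblique_cyls_card:
  assumes w: "w > 0" and pq: "p > 0" "q > 0" "w = real p / real q * cot (pi * real p / (2 * real (p + q)))"
  defines "S \<equiv> {C. lam_stable_cyl w C \<and> \<not> is_pingpong_cyl w C}"
  shows "finite S \<and> card S \<le> 2"
proof -
  define \<rho> where "\<rho> = real p / (real q * w)"
  define a where "a = 1 / sqrt (1 + \<rho>\<^sup>2)"
  have a0: "a > 0" "\<rho> > 0" unfolding a_def \<rho>_def using pq(1,2) w by (simp_all add: add_pos_nonneg)
  have dS: "\<bar>fst (dir w x)\<bar> = a \<and> \<bar>snd (dir w x)\<bar> = \<rho> * a" if "C \<in> S" "x \<in> C" for C x
    using stable_oblique_cyl_abs_dir[OF w _ _ that(2) pq] that(1) unfolding S_def a_def \<rho>_def by auto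
  obtain N M g where NM: "N > 0" "M > 0" "coprime N M" and g0: "g > 0" and pN: "p = N * g" and qM: "q = M * g"
    using obtain_coprime_factors[OF pq(1,2)] by metis
  define u where "u = w / (a * real N)"
  have u0: "u > 0" unfolding u_def using w a0 NM by simp
  have A: "w / a = real N * u" unfolding u_def using NM a0 by simp
  have B: "1 / (\<rho> * a) = real M * u"
    unfolding u_def \<rho>_def using pq(1,2) w a0 g0 NM by (simp add: pN qM field_simps)
  define good where "good C z \<longleftrightarrow> periodic_pt w (billiard w) z \<and> oblique w z \<and> cyl w z = C
    \<and> normal_pt w u z \<and> \<bar>fst (dir w z)\<bar> = a \<and> \<bar>snd (dir w z)\<bar> = \<rho> * a" for C z
  have ex: "\<exists>z. good C z" if "C \<in> S" for C
    unfolding good_def using that dS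
    by (intro stable_oblique_cyl_normal_pt[OF w _ _ _ A B u0 NM]) (auto simp: S_def)
  define F where "F C = sign_class M N (dir w (SOME z. good C z))" for C
  have inj: "inj_on F S"
  proof (rule inj_onI)
    fix C1 C2 assume C: "C1 \<in> S" "C2 \<in> S" and FF: "F C1 = F C2"
    have g1: "good C1 (SOME z. good C1 z)" and g2: "good C2 (SOME z. good C2 z)"
      using someI_ex[OF ex[OF C(1)]] someI_ex[OF ex[OF C(2)]] .
    show "C1 = C2"
      using normal_pts_same_cyl[OF w _ _ _ _ _ _ _ _ u0 NM _ _ FF[unfolded F_def]] g1 g2 A B
      unfolding good_def by auto
  qed
  have "finite S" by (rule finite_imageD[OF _ inj]) simp
  moreover have "card S = card (F ` S)" by (rule card_image[OF inj, symmetric])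
  moreover have "card (F ` S) \<le> card (UNIV :: bool set)" by (rule card_mono) auto
  ultimately show ?thesis by simp
qed

theorem proposition4p6:
  fixes w :: real
  assumes "w > 0"
  shows "card {C. is_pingpong_cyl w C} = 2
    \<and> (\<forall>C. is_pingpong_cyl w C \<longrightarrow> lam_stable_cyl w C)
    \<and> ((\<nexists>p q :: nat. p > 0 \<and> q > 0 \<and> w = real p / real q * cot (pi * real p / (2 * real (p + q))))
         \<longrightarrow> (\<forall>C. lam_stable_cyl w C \<longrightarrow> is_pingpong_cyl w C))
    \<and> (\<forall>p q :: nat. p > 0 \<and> q > 0 \<and> w = real p / real q * cot (pi * real p / (2 * real (p + q)))
         \<longrightarrow> finite {C. lam_stable_cyl w C \<and> \<not> is_pingpong_cyl w C}
           \<and> card {C. lam_stable_cyl w C \<and> \<not> is_pingpong_cyl w C} \<le> 2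
           \<and> (\<forall>C. lam_stable_cyl w C \<and> \<not> is_pingpong_cyl w C \<longrightarrow>
                 (\<forall>x\<in>C. slope w x \<in> {real p / (real q * w), - (real p / (real q * w))})))"
proof (intro conjI allI impI ballI)
  show "card {C. is_pingpong_cyl w C} = 2" by (rule card_pingpong_cyls[OF assms])
next
  fix C assume "is_pingpong_cyl w C"
  then show "lam_stable_cyl w C" by (rule pingpong_cyl_stable[OF assms])
next
  fix C assume "\<nexists>p q :: nat. p > 0 \<and> q > 0 \<and> w = real p / real q * cot (pi * real p / (2 * real (p + q)))"
    and "lam_stable_cyl w C"
  then show "is_pingpong_cyl w C" using stable_oblique_cyl_resonant[OF assms] by blast
next
  fix p q :: nat
  assume pq: "p > 0 \<and> q > 0 \<and> w = real p / real q * cot (pi * real p / (2 * real (p + q)))"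
  then show "finite {C. lam_stable_cyl w C \<and> \<not> is_pingpong_cyl w C}"
    "card {C. lam_stable_cyl w C \<and> \<not> is_pingpong_cyl w C} \<le> 2"
    using stable_oblique_cyls_card[OF assms] by blast+
  fix C x assume C: "lam_stable_cyl w C \<and> \<not> is_pingpong_cyl w C" and x: "x \<in> C"
  have "\<bar>slope w x\<bar> = \<bar>snd (dir w x)\<bar> / \<bar>fst (dir w x)\<bar>" unfolding slope_def by (simp add: abs_divide)
  also have "\<dots> = real p / (real q * w)"
    using C pq by (intro stable_oblique_cyl_slope[OF assms _ _ x]) auto
  finally have "\<bar>slope w x\<bar> = real p / (real q * w)" .
  then show "slope w x \<in> {real p / (real q * w), - (real p / (real q * w))}" by (auto simp: abs_if split: if_splits)
qed
end
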